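(* Let $f\in H$ be time-independent. Then the functional $\mathcal L(z)=E(z)-2\langle u,f\rangle$, $z=(u,v)\in\mathcal H$, is a Lyapunov functional for $S(t)$, namely $\mathcal L\in C(\mathcal H,\mathbb R)$ and: (i) $\mathcal L(z)\to\infty$ if and only if $\|z\|_{\mathcal H}\to\infty$; (ii) $t\mapsto\mathcal L(S(t)z)$ is nonincreasing for every $z\in\mathcal H$, and in fact $\frac{d}{dt}\mathcal L(S(t)z)=-2\|\partial_t u(t)\|^2$; (iii) if $\mathcal L(S(t)z)=\mathcal L(z)$ for all $t>0$, then $z\in\mathcal S$.
   Context: $H=L^2(\Omega,\mu)$ is a real Hilbert space of (classes of) real functions, with inner product $\langle\cdot,\cdot\rangle$ and norm $\|\cdot\|$; $u^+=\max(u,0)$ pointwise. $A$ is a strictly positive selfadjoint operator on $H$ with compact inverse, first eigenvalue $\lambda_1>0$; $H^r=\mathcal D(A^{r/4})$, $\|u\|_r=\|A^{r/4}u\|$; $\mathcal H=H^2\times H$ with $\|(u,v)\|_{\mathcal H}^2=\|u\|_2^2+\|v\|^2$. Fixed $p,k\in\mathbb R$. $S(t)z=(u(t),\partial_tu(t))$ is the semigroup on $\mathcal H$ given by the weak solution of $\partial_{tt}u+Au+\partial_t u-(p-\|u\|_1^2)A^{1/2}u+k^2u^+=f$, $(u(0),\partial_tu(0))=z$. $E(z)=\|u\|_2^2+\|v\|^2+\tfrac12(\|u\|_1^2-p)^2+k^2\|u^+\|^2$ for $z=(u,v)$. $\mathcal S$ is the set of stationary points $(u,0)$ of $S(t)$,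 i.e. $u$ weakly solves $Au-(p-\|u\|_1^2)A^{1/2}u+k^2u^+=f$. *)

theory Defs
  imports "HOL-Analysis.Analysis"
begin

text \<open>Elements of H = L^2(Omega,mu) are represented by real functions on the
  points of the measure space M; all notions below only depend on the a.e.-class.\<close>

definition L2 :: "'w measure \<Rightarrow> ('w \<Rightarrow> real) set" where
  "L2 M = {u. u \<in> borel_measurable M \<and> integrable M (\<lambda>x. (u x)\<^sup>2)}"

definition ip :: "'w measure \<Rightarrow> ('w \<Rightarrow> real) \<Rightarrow> ('w \<Rightarrow> real) \<Rightarrow> real" where
  "ip M u v = integral\<^sup>L M (\<lambda>x. u x * v x)"

definition nrm :: "'w measure \<Rightarrow> ('w \<Rightarrow> real) \<Rightarrow> real" where
  "nrm M u = sqrt (ip M u u)"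

definition pospart :: "('w \<Rightarrow> real) \<Rightarrow> ('w \<Rightarrow> real)" where
  "pospart u = (\<lambda>x. max (u x) 0)"

text \<open>Spectral data of A: an orthonormal basis (e i), i in I, of H consisting of
  eigenvectors, A e_i = lam i * e_i.  A is strictly positive selfadjoint with compact
  inverse iff lam i > 0 and every sublevel set {i. lam i <= c} is finite.\<close>

definition spectral_setting ::
  "'w measure \<Rightarrow> nat set \<Rightarrow> (nat \<Rightarrow> 'w \<Rightarrow> real) \<Rightarrow> (nat \<Rightarrow> real) \<Rightarrow> bool" where
  "spectral_setting M I e lam \<longleftrightarrow>
     (\<forall>i\<in>I. e i \<in> L2 M) \<and>
     (\<forall>i\<in>I. \<forall>j\<in>I. ip M (e i) (e j) = (if i = j then 1 else 0)) \<and>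
     (\<forall>u\<in>L2 M. ((\<lambda>i. (ip M u (e i))\<^sup>2) has_sum (nrm M u)\<^sup>2) I) \<and>
     (\<forall>i\<in>I. lam i > 0) \<and>
     (\<forall>c. finite {i\<in>I. lam i \<le> c})"

definition coef :: "'w measure \<Rightarrow> (nat \<Rightarrow> 'w \<Rightarrow> real) \<Rightarrow> ('w \<Rightarrow> real) \<Rightarrow> nat \<Rightarrow> real" where
  "coef M e u i = ip M u (e i)"

text \<open>H^r = D(A^(r/4)) and ||u||_r = ||A^(r/4) u||.\<close>

definition Hr :: "'w measure \<Rightarrow> nat set \<Rightarrow> (nat \<Rightarrow> 'w \<Rightarrow> real) \<Rightarrow> (nat \<Rightarrow> real) \<Rightarrow> real
    \<Rightarrow> ('w \<Rightarrow> real) set" where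
  "Hr M I e lam r = {u \<in> L2 M. (\<lambda>i. lam i powr (r/2) * (coef M e u i)\<^sup>2) summable_on I}"

definition nrm_r :: "'w measure \<Rightarrow> nat set \<Rightarrow> (nat \<Rightarrow> 'w \<Rightarrow> real) \<Rightarrow> (nat \<Rightarrow> real) \<Rightarrow> real
    \<Rightarrow> ('w \<Rightarrow> real) \<Rightarrow> real" where
  "nrm_r M I e lam r u = sqrt (infsum (\<lambda>i. lam i powr (r/2) * (coef M e u i)\<^sup>2) I)"

definition phase :: "'w measure \<Rightarrow> nat set \<Rightarrow> (nat \<Rightarrow> 'w \<Rightarrow> real) \<Rightarrow> (nat \<Rightarrow> real)
    \<Rightarrow> (('w \<Rightarrow> real) \<times> ('w \<Rightarrow> real)) set" where
  "phase M I e lam = Hr M I e lam 2 \<times> L2 M"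

definition phase_norm :: "'w measure \<Rightarrow> nat set \<Rightarrow> (nat \<Rightarrow> 'w \<Rightarrow> real) \<Rightarrow> (nat \<Rightarrow> real)
    \<Rightarrow> ('w \<Rightarrow> real) \<times> ('w \<Rightarrow> real) \<Rightarrow> real" where
  "phase_norm M I e lam z = sqrt ((nrm_r M I e lam 2 (fst z))\<^sup>2 + (nrm M (snd z))\<^sup>2)"

text \<open>Weak solution on [0,oo) of
  u_tt + A u + u_t - (p - ||u||_1^2) A^(1/2) u + k^2 u^+ = f,
  with u in C([0,oo),H^2), u_t = v in C([0,oo),H); the equation is tested against the
  eigenbasis (equivalently against all test functions in H^2).\<close>

definition weak_solution ::
  "'w measure \<Rightarrow> nat set \<Rightarrow> (nat \<Rightarrow> 'w \<Rightarrow> real) \<Rightarrow> (nat \<Rightarrow> real) \<Rightarrow> real \<Rightarrow> real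
   \<Rightarrow> ('w \<Rightarrow> real) \<Rightarrow> (real \<Rightarrow> 'w \<Rightarrow> real) \<Rightarrow> (real \<Rightarrow> 'w \<Rightarrow> real) \<Rightarrow> bool" where
  "weak_solution M I e lam p k f u v \<longleftrightarrow>
     (\<forall>t\<ge>0. u t \<in> Hr M I e lam 2 \<and> v t \<in> L2 M) \<and>
     (\<forall>t0\<ge>0. ((\<lambda>t. nrm_r M I e lam 2 (u t - u t0)) \<longlongrightarrow> 0) (at t0 within {0..})) \<and>
     (\<forall>t0\<ge>0. ((\<lambda>t. nrm M (v t - v t0)) \<longlongrightarrow> 0) (at t0 within {0..})) \<and>
     (\<forall>i\<in>I. \<forall>t\<ge>0.
        ((\<lambda>s. coef M e (u s) i) has_real_derivative coef M e (v t) i) (at t within {0..}) \<and>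
        ((\<lambda>s. coef M e (v s) i) has_real_derivative
            (- lam i * coef M e (u t) i - coef M e (v t) i
             + (p - (nrm_r M I e lam 1 (u t))\<^sup>2) * sqrt (lam i) * coef M e (u t) i
             - k\<^sup>2 * coef M e (pospart (u t)) i + coef M e f i)) (at t within {0..}))"

definition energy :: "'w measure \<Rightarrow> nat set \<Rightarrow> (nat \<Rightarrow> 'w \<Rightarrow> real) \<Rightarrow> (nat \<Rightarrow> real) \<Rightarrow> real
    \<Rightarrow> real \<Rightarrow> ('w \<Rightarrow> real) \<times> ('w \<Rightarrow> real) \<Rightarrow> real" where
  "energy M I e lam p k z =
     (nrm_r M I e lam 2 (fst z))\<^sup>2 + (nrm M (snd z))\<^sup>2
     + 1/2 * ((nrm_r M I e lam 1 (fst z))\<^sup>2 - p)\<^sup>2 + k\<^sup>2 * (nrm M (pospart (fst z)))\<^sup>2"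

definition stationary_set :: "'w measure \<Rightarrow> nat set \<Rightarrow> (nat \<Rightarrow> 'w \<Rightarrow> real) \<Rightarrow> (nat \<Rightarrow> real)
    \<Rightarrow> real \<Rightarrow> real \<Rightarrow> ('w \<Rightarrow> real) \<Rightarrow> (('w \<Rightarrow> real) \<times> ('w \<Rightarrow> real)) set" where
  "stationary_set M I e lam p k f =
     {(u, v). u \<in> Hr M I e lam 2 \<and> v \<in> L2 M \<and> (AE x in M. v x = 0) \<and>
        (\<forall>i\<in>I. lam i * coef M e u i
                 - (p - (nrm_r M I e lam 1 u)\<^sup>2) * sqrt (lam i) * coef M e u i
                 + k\<^sup>2 * coef M e (pospart u) i = coef M e f i)}"

definition lyap :: "'w measure \<Rightarrow> nat set \<Rightarrow> (nat \<Rightarrow> 'w \<Rightarrow> real) \<Rightarrow> (nat \<Rightarrow> real) \<Rightarrow> real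
    \<Rightarrow> real \<Rightarrow> ('w \<Rightarrow> real) \<Rightarrow> ('w \<Rightarrow> real) \<times> ('w \<Rightarrow> real) \<Rightarrow> real" where
  "lyap M I e lam p k f z = energy M I e lam p k z - 2 * ip M (fst z) f"

end

theory Submission
  imports Defs
begin

text \<open>In the eigenbasis of \<open>A\<close> every coefficient of a weak solution is differentiable in time,
  so testing the equation with the velocity \<open>v\<close> gives the time derivative of each coefficient of
  the energy. On compact time intervals, continuity of \<open>u\<close> in \<open>H\<^sup>2\<close> and of \<open>v\<close> in \<open>H\<close> makes the
  tails of these coefficient series uniformly small, which justifies termwise differentiation.
  The non-smooth term \<open>\<parallel>u\<^sup>+\<parallel>\<^sup>2\<close> is differentiated by squeezing its remainder between \<open>0\<close> and
  \<open>\<parallel>u(s) - u(t)\<parallel>\<^sup>2\<close>. Everything except \<open>-2\<parallel>v\<parallel>\<^sup>2\<close> cancels, so the functional decreases; if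
  it is constant, then \<open>v \<equiv> 0\<close>, and differentiating the coefficients of \<open>v\<close> at \<open>t = 0\<close> gives
  the stationary equation. Continuity and coercivity follow from Cauchy--Schwarz and the
  spectral gap \<open>\<lambda>\<^sub>i \<ge> \<lambda>\<^sub>1 > 0\<close>.\<close>

lemma two_abs_mult_le:
  fixes a b t :: real
  assumes "t > 0"
  shows "2 * \<bar>a * b\<bar> \<le> t * a\<^sup>2 + b\<^sup>2 / t"
proof -
  have "0 \<le> (t * \<bar>a\<bar> - \<bar>b\<bar>)\<^sup>2" by simp
  hence "2 * t * \<bar>a * b\<bar> \<le> t * (t * a\<^sup>2) + b\<^sup>2"
    by (simp add: power2_eq_square algebra_simps abs_mult)
  hence "t * (2 * \<bar>a * b\<bar>) \<le> t * (t * a\<^sup>2 + b\<^sup>2 / t)"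
    using assms by (simp add: algebra_simps)
  thus ?thesis using assms by (simp add: mult_le_cancel_left_pos)
qed

lemma abs_le_sqrt_mult_sqrt:
  fixes x y b :: real
  assumes x: "0 \<le> x" and y: "0 \<le> y" and h: "\<And>t. t > 0 \<Longrightarrow> 2 * \<bar>b\<bar> \<le> t * x + y / t"
  shows "\<bar>b\<bar> \<le> sqrt x * sqrt y"
proof (cases "x > 0 \<and> y > 0")
  case True
  define t where "t = sqrt y / sqrt x"
  have sx: "sqrt x > 0" using True by simp
  have tp: "t > 0" using True by (simp add: t_def)
  have xx: "x = sqrt x * sqrt x" and yy: "y = sqrt y * sqrt y" using True by simp_all
  have "t * x = sqrt x * sqrt y" unfolding t_def using sx
    by (subst xx) (simp add: field_simps)
  moreover have "y / t = sqrt x * sqrt y" unfolding t_def using sx True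
    by (subst yy) (simp add: field_simps)
  ultimately show ?thesis using h[OF tp] by simp
next
  case False
  show ?thesis
  proof (rule ccontr)
    assume "\<not> ?thesis"
    hence bp: "\<bar>b\<bar> > 0" by (smt (verit) real_sqrt_ge_zero mult_nonneg_nonneg x y)
    show False
    proof (cases "x = 0")
      case True
      have "(y + 1) / \<bar>b\<bar> > 0" using bp y by simp
      from h[OF this] True have "2 * \<bar>b\<bar> \<le> y / ((y + 1) / \<bar>b\<bar>)" by simp
      also have "\<dots> = y * \<bar>b\<bar> / (y + 1)" using bp y by (simp add: field_simps)
      also have "\<dots> \<le> \<bar>b\<bar>" using bp y by (simp add: divide_le_eq)
      finally show False using bp by simp
    next
      case xne: False
      have xp: "x > 0" and y0: "y = 0" using xne x y False by auto
      have "\<bar>b\<bar> / x > 0" using bp xp by simp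
      from h[OF this] y0 have "2 * \<bar>b\<bar> \<le> \<bar>b\<bar> / x * x" by simp
      thus False using xp bp by simp
    qed
  qed
qed

text \<open>The remainder of the first-order Taylor expansion of \<open>s \<mapsto> (max s 0)\<^sup>2\<close> at \<open>b\<close>.\<close>

lemma max0_square_remainder_bounds:
  fixes a b :: real
  shows "0 \<le> (max a 0)\<^sup>2 - (max b 0)\<^sup>2 - 2 * ((a - b) * max b 0) \<and>
         (max a 0)\<^sup>2 - (max b 0)\<^sup>2 - 2 * ((a - b) * max b 0) \<le> (a - b)\<^sup>2"
proof (cases "a \<ge> 0"; cases "b \<ge> 0")
  assume "a \<ge> 0" "b \<ge> 0"
  hence "(max a 0)\<^sup>2 - (max b 0)\<^sup>2 - 2 * ((a - b) * max b 0) = (a - b)\<^sup>2"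
    by (simp add: max_def power2_eq_square algebra_simps)
  thus ?thesis by simp
next
  assume "a \<ge> 0" "\<not> b \<ge> 0"
  hence e: "(max a 0)\<^sup>2 - (max b 0)\<^sup>2 - 2 * ((a - b) * max b 0) = a\<^sup>2"
    by (simp add: max_def power2_eq_square algebra_simps)
  have "a * b \<le> 0" using \<open>a \<ge> 0\<close> \<open>\<not> b \<ge> 0\<close> by (simp add: mult_nonneg_nonpos)
  moreover have "(a - b)\<^sup>2 = a\<^sup>2 - 2 * (a * b) + b\<^sup>2" by (simp add: power2_eq_square algebra_simps)
  ultimately show ?thesis using e zero_le_power2[of b] zero_le_power2[of a] by linarith
next
  assume "\<not> a \<ge> 0" "b \<ge> 0"
  hence e: "(max a 0)\<^sup>2 - (max b 0)\<^sup>2 - 2 * ((a - b) * max b 0) = b * (b - 2 * a)"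
    by (simp add: max_def power2_eq_square algebra_simps)
  have "0 \<le> b * (b - 2 * a)" using \<open>\<not> a \<ge> 0\<close> \<open>b \<ge> 0\<close> by simp
  moreover have "(a - b)\<^sup>2 = b * (b - 2 * a) + a\<^sup>2" by (simp add: power2_eq_square algebra_simps)
  ultimately show ?thesis using e by simp
next
  assume "\<not> a \<ge> 0" "\<not> b \<ge> 0" thus ?thesis by (simp add: max_def)
qed

lemma quadratic_increment_le:
  fixes a r c A :: real
  assumes "0 \<le> a" "a \<le> r * c" "0 \<le> r" "r \<le> 1" "0 \<le> c" "0 \<le> A"
  shows "a\<^sup>2 + 2 * (A * a) \<le> r * (c\<^sup>2 + 2 * A * c)"
proof -
  have "a\<^sup>2 \<le> (r * c)\<^sup>2" using assms by (intro power_mono) auto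
  also have "\<dots> = r * (r * c\<^sup>2)" by (simp add: power2_eq_square)
  also have "\<dots> \<le> r * (1 * c\<^sup>2)" using assms by (intro mult_left_mono mult_right_mono) auto
  finally have "a\<^sup>2 \<le> r * c\<^sup>2" by simp
  moreover have "A * a \<le> A * (r * c)" using assms by (intro mult_left_mono) auto
  ultimately show ?thesis by (simp add: algebra_simps)
qed

section \<open>The space \<open>L\<^sup>2\<close>\<close>

lemma L2_integrable_mult:
  assumes "u \<in> L2 M" "w \<in> L2 M"
  shows "integrable M (\<lambda>x. u x * w x)"
proof (rule Bochner_Integration.integrable_bound)
  show "integrable M (\<lambda>x. (u x)\<^sup>2 + (w x)\<^sup>2)" using assms by (auto simp: L2_def)
  show "(\<lambda>x. u x * w x) \<in> borel_measurable M" using assms by (auto simp: L2_def)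
  show "AE x in M. norm (u x * w x) \<le> norm ((u x)\<^sup>2 + (w x)\<^sup>2)"
  proof (rule AE_I2)
    fix x
    have "2 * \<bar>u x * w x\<bar> \<le> 1 * (u x)\<^sup>2 + (w x)\<^sup>2 / 1" by (rule two_abs_mult_le) simp
    thus "norm (u x * w x) \<le> norm ((u x)\<^sup>2 + (w x)\<^sup>2)" by simp
  qed
qed

lemma L2_add:
  assumes "u \<in> L2 M" "w \<in> L2 M"
  shows "(\<lambda>x. u x + w x) \<in> L2 M"
proof -
  have "integrable M (\<lambda>x. (u x)\<^sup>2 + (w x)\<^sup>2 + 2 * (u x * w x))"
    using assms L2_integrable_mult[OF assms] by (auto simp: L2_def)
  moreover have "(\<lambda>x. (u x)\<^sup>2 + (w x)\<^sup>2 + 2 * (u x * w x)) = (\<lambda>x. (u x + w x)\<^sup>2)"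
    by (auto simp: power2_eq_square algebra_simps)
  ultimately show ?thesis using assms by (auto simp: L2_def)
qed

lemma L2_diff:
  assumes "u \<in> L2 M" "w \<in> L2 M"
  shows "u - w \<in> L2 M"
proof -
  have "(\<lambda>x. - w x) \<in> L2 M" using assms(2) by (simp add: L2_def)
  from L2_add[OF assms(1) this] show ?thesis by (simp add: fun_diff_def)
qed

lemma L2_pospart:
  assumes "u \<in> L2 M"
  shows "pospart u \<in> L2 M"
proof -
  have m: "pospart u \<in> borel_measurable M" using assms by (auto simp: L2_def pospart_def)
  have "integrable M (\<lambda>x. (pospart u x)\<^sup>2)"
  proof (rule Bochner_Integration.integrable_bound)
    show "integrable M (\<lambda>x. (u x)\<^sup>2)" using assms by (auto simp: L2_def)
    show "(\<lambda>x. (pospart u x)\<^sup>2) \<in> borel_measurable M" using m by auto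
    show "AE x in M. norm ((pospart u x)\<^sup>2) \<le> norm ((u x)\<^sup>2)"
      by (rule AE_I2) (auto simp: pospart_def max_def power2_eq_square)
  qed
  thus ?thesis using m by (simp add: L2_def)
qed

lemma ip_commute: "ip M u w = ip M w u"
  by (simp add: ip_def mult.commute)

lemma ip_add_left:
  assumes "u \<in> L2 M" "w \<in> L2 M" "g \<in> L2 M"
  shows "ip M (\<lambda>x. u x + w x) g = ip M u g + ip M w g"
  using L2_integrable_mult[OF assms(1,3)] L2_integrable_mult[OF assms(2,3)]
  by (simp add: ip_def distrib_right)

lemma ip_diff_left:
  assumes "u \<in> L2 M" "w \<in> L2 M" "g \<in> L2 M"
  shows "ip M (u - w) g = ip M u g - ip M w g"
  using L2_integrable_mult[OF assms(1,3)] L2_integrable_mult[OF assms(2,3)]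
  by (simp add: ip_def left_diff_distrib)

lemma ip_self_nonneg: "0 \<le> ip M u u"
  unfolding ip_def by (rule integral_nonneg_AE) simp

lemma nrm_nonneg: "0 \<le> nrm M u"
  using ip_self_nonneg[of M u] by (simp add: nrm_def)

lemma nrm_square: "(nrm M u)\<^sup>2 = ip M u u"
  unfolding nrm_def using ip_self_nonneg[of M u] by simp

lemma two_abs_ip_le:
  assumes "u \<in> L2 M" "w \<in> L2 M" "t > 0"
  shows "2 * \<bar>ip M u w\<bar> \<le> t * ip M u u + ip M w w / t"
proof -
  have "2 * \<bar>ip M u w\<bar> = \<bar>integral\<^sup>L M (\<lambda>x. 2 * (u x * w x))\<bar>" by (simp add: ip_def)
  also have "\<dots> \<le> integral\<^sup>L M (\<lambda>x. \<bar>2 * (u x * w x)\<bar>)"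
    by (rule integral_abs_bound)
  also have "\<dots> \<le> integral\<^sup>L M (\<lambda>x. t * (u x)\<^sup>2 + (w x)\<^sup>2 / t)"
  proof (rule integral_mono)
    show "integrable M (\<lambda>x. \<bar>2 * (u x * w x)\<bar>)"
      using L2_integrable_mult[OF assms(1,2)] by auto
    show "integrable M (\<lambda>x. t * (u x)\<^sup>2 + (w x)\<^sup>2 / t)" using assms by (auto simp: L2_def)
    show "\<bar>2 * (u x * w x)\<bar> \<le> t * (u x)\<^sup>2 + (w x)\<^sup>2 / t" for x
      using two_abs_mult_le[OF assms(3), of "u x" "w x"] by (simp add: abs_mult)
  qed
  also have "\<dots> = t * ip M u u + ip M w w / t"
    using assms by (simp add: ip_def L2_def power2_eq_square)
  finally show ?thesis .
qed

lemma abs_ip_le_nrm_mult: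
  assumes "u \<in> L2 M" "w \<in> L2 M"
  shows "\<bar>ip M u w\<bar> \<le> nrm M u * nrm M w"
  unfolding nrm_def
  by (rule abs_le_sqrt_mult_sqrt[OF ip_self_nonneg ip_self_nonneg two_abs_ip_le[OF assms]])

lemma AE_zero_if_nrm_eq_0:
  assumes "u \<in> L2 M" "nrm M u = 0"
  shows "AE x in M. u x = 0"
proof -
  have "integral\<^sup>L M (\<lambda>x. (u x)\<^sup>2) = 0"
    using assms(2) nrm_square[of M u] by (simp add: ip_def power2_eq_square)
  hence "AE x in M. (u x)\<^sup>2 = 0"
    using integral_nonneg_eq_0_iff_AE[of M "\<lambda>x. (u x)\<^sup>2"] assms(1) by (auto simp: L2_def)
  thus ?thesis by auto
qed

lemma ip_cong_AE:
  assumes "AE x in M. u x = w x" "u \<in> L2 M" "w \<in> L2 M" "g \<in> L2 M"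
  shows "ip M u g = ip M w g"
  unfolding ip_def using assms by (intro integral_cong_AE) (auto simp: L2_def)

lemma ip_self_increment:
  assumes u: "u \<in> L2 M" and u': "u' \<in> L2 M"
  shows "\<bar>ip M u' u' - ip M u u\<bar>
    \<le> ip M (u' - u) (u' - u) + 2 * (sqrt (ip M u u) * sqrt (ip M (u' - u) (u' - u)))"
proof -
  define x where "x = u' - u"
  have xL: "x \<in> L2 M" unfolding x_def by (rule L2_diff[OF u' u])
  have u'e: "u' = (\<lambda>t. u t + x t)" unfolding x_def by auto
  have "ip M u' u' = ip M u u' + ip M x u'"
    unfolding u'e by (rule ip_add_left[OF u xL L2_add[OF u xL]])
  also have "\<dots> = ip M u u + 2 * ip M u x + ip M x x"
    using ip_add_left[OF u xL u] ip_add_left[OF u xL xL] ip_commute[of M u u'] ip_commute[of M x u']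
      ip_commute[of M x u] unfolding u'e by simp
  finally have "ip M u' u' = ip M u u + 2 * ip M u x + ip M x x" .
  moreover have "\<bar>ip M u x\<bar> \<le> sqrt (ip M u u) * sqrt (ip M x x)"
    using abs_ip_le_nrm_mult[OF u xL] by (simp add: nrm_def)
  moreover have "0 \<le> ip M x x" by (rule ip_self_nonneg)
  ultimately show ?thesis unfolding x_def[symmetric] by (simp add: abs_le_iff)
qed

lemma ip_pospart_le:
  assumes u: "u \<in> L2 M"
  shows "ip M (pospart u) (pospart u) \<le> ip M u u"
  unfolding ip_def
  using L2_integrable_mult[OF L2_pospart[OF u] L2_pospart[OF u]] L2_integrable_mult[OF u u]
  by (intro integral_mono) (auto simp: pospart_def max_def)

lemma pospart_remainder_bounds:
  assumes u: "u \<in> L2 M" and w: "w \<in> L2 M"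
  defines "R \<equiv> ip M (pospart u) (pospart u) - ip M (pospart w) (pospart w)
                - 2 * (ip M u (pospart w) - ip M w (pospart w))"
  shows "0 \<le> R \<and> R \<le> ip M (u - w) (u - w)"
proof -
  have pu: "pospart u \<in> L2 M" and pw: "pospart w \<in> L2 M" using L2_pospart u w by auto
  note i = L2_integrable_mult[OF pu pu] L2_integrable_mult[OF pw pw]
    L2_integrable_mult[OF u pw] L2_integrable_mult[OF w pw]
  define h where "h x = pospart u x * pospart u x - pospart w x * pospart w x
                        - 2 * (u x * pospart w x - w x * pospart w x)" for x
  have ih: "integrable M h" unfolding h_def using i by auto
  have Rh: "R = integral\<^sup>L M h" unfolding R_def h_def ip_def using i by simp
  have hb: "0 \<le> h x \<and> h x \<le> (u - w) x * (u - w) x" for x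
    using max0_square_remainder_bounds[of "u x" "w x"] unfolding h_def pospart_def
    by (simp add: power2_eq_square algebra_simps)
  have "0 \<le> integral\<^sup>L M h" using hb by (intro integral_nonneg_AE) auto
  moreover have "integral\<^sup>L M h \<le> ip M (u - w) (u - w)"
    unfolding ip_def using ih L2_integrable_mult[OF L2_diff[OF u w] L2_diff[OF u w]] hb
    by (intro integral_mono) auto
  ultimately show ?thesis using Rh by simp
qed

lemma ip_pospart_self_increment:
  assumes u: "u \<in> L2 M" and u': "u' \<in> L2 M"
  shows "\<bar>ip M (pospart u') (pospart u') - ip M (pospart u) (pospart u)\<bar>
    \<le> ip M (u' - u) (u' - u) + 2 * (sqrt (ip M u u) * sqrt (ip M (u' - u) (u' - u)))"
proof -
  have e: "ip M u' (pospart u) - ip M u (pospart u) = ip M (u' - u) (pospart u)"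
    by (rule ip_diff_left[OF u' u L2_pospart[OF u], symmetric])
  have "\<bar>ip M (u' - u) (pospart u)\<bar> \<le> nrm M (u' - u) * nrm M (pospart u)"
    by (rule abs_ip_le_nrm_mult[OF L2_diff[OF u' u] L2_pospart[OF u]])
  also have "\<dots> \<le> sqrt (ip M (u' - u) (u' - u)) * sqrt (ip M u u)"
    unfolding nrm_def using ip_pospart_le[OF u] ip_self_nonneg[of M "u' - u"]
    by (intro mult_left_mono) auto
  finally show ?thesis
    using pospart_remainder_bounds[OF u' u] e by (simp add: abs_le_iff mult.commute)
qed

section \<open>Weighted square sums\<close>

lemma has_sum_diff:
  fixes f g :: "'a \<Rightarrow> real"
  assumes "(f has_sum a) A" "(g has_sum b) A"
  shows "((\<lambda>x. f x - g x) has_sum (a - b)) A"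
  using has_sum_add[OF assms(1) has_sum_uminusI[OF assms(2)]] by simp

lemma abs_infsum_le_infsum_abs:
  fixes f :: "'a \<Rightarrow> real"
  assumes "f summable_on I"
  shows "\<bar>infsum f I\<bar> \<le> infsum (\<lambda>i. \<bar>f i\<bar>) I"
proof -
  have "Infinite_Sum.abs_summable_on f I" using assms summable_on_iff_abs_summable_on_real by blast
  from norm_infsum_bound[OF this] show ?thesis by simp
qed

lemma weighted_mult_summable:
  fixes w x y :: "'a \<Rightarrow> real"
  assumes w: "\<And>i. i \<in> I \<Longrightarrow> 0 \<le> w i"
    and sx: "(\<lambda>i. w i * (x i)\<^sup>2) summable_on I" and sy: "(\<lambda>i. w i * (y i)\<^sup>2) summable_on I"
  shows "(\<lambda>i. w i * x i * y i) summable_on I"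
proof -
  have b: "norm (w i * x i * y i) \<le> w i * (x i)\<^sup>2 + w i * (y i)\<^sup>2" if i: "i \<in> I" for i
  proof -
    have "2 * \<bar>x i * y i\<bar> \<le> 1 * (x i)\<^sup>2 + (y i)\<^sup>2 / 1" by (rule two_abs_mult_le) simp
    hence "w i * \<bar>x i * y i\<bar> \<le> w i * ((x i)\<^sup>2 + (y i)\<^sup>2)"
      using w[OF i] by (intro mult_left_mono) auto
    thus ?thesis using w[OF i] by (simp add: abs_mult algebra_simps)
  qed
  have "(\<lambda>i. norm (w i * x i * y i)) summable_on I"
    using summable_on_comparison_test[OF summable_on_add[OF sx sy]] b by simp
  thus ?thesis using summable_on_iff_abs_summable_on_real by blast
qed

lemma mult_summable_if_squares_summable:
  fixes x y :: "'a \<Rightarrow> real"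
  assumes "(\<lambda>i. (x i)\<^sup>2) summable_on I" "(\<lambda>i. (y i)\<^sup>2) summable_on I"
  shows "(\<lambda>i. x i * y i) summable_on I"
  using weighted_mult_summable[of I "\<lambda>_. 1" x y] assms by simp

lemma two_abs_weighted_infsum_le:
  fixes w x y :: "'a \<Rightarrow> real"
  assumes w: "\<And>i. i \<in> I \<Longrightarrow> 0 \<le> w i"
    and sx: "(\<lambda>i. w i * (x i)\<^sup>2) summable_on I" and sy: "(\<lambda>i. w i * (y i)\<^sup>2) summable_on I"
    and t: "t > 0"
  shows "2 * \<bar>infsum (\<lambda>i. w i * x i * y i) I\<bar>
    \<le> t * infsum (\<lambda>i. w i * (x i)\<^sup>2) I + infsum (\<lambda>i. w i * (y i)\<^sup>2) I / t"
proof -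
  have s: "(\<lambda>i. w i * x i * y i) summable_on I" by (rule weighted_mult_summable[OF w sx sy])
  have sa: "(\<lambda>i. \<bar>w i * x i * y i\<bar>) summable_on I"
    using summable_on_iff_abs_summable_on_real[THEN iffD1, OF s] by simp
  have sx': "(\<lambda>i. t * (w i * (x i)\<^sup>2)) summable_on I"
    and sy': "(\<lambda>i. (1/t) * (w i * (y i)\<^sup>2)) summable_on I"
    by (intro summable_on_cmult_right sx sy)+
  have pw: "2 * \<bar>w i * x i * y i\<bar> \<le> t * (w i * (x i)\<^sup>2) + (1/t) * (w i * (y i)\<^sup>2)"
    if i: "i \<in> I" for i
  proof -
    have "w i * (2 * \<bar>x i * y i\<bar>) \<le> w i * (t * (x i)\<^sup>2 + (y i)\<^sup>2 / t)"
      using two_abs_mult_le[OF t, of "x i" "y i"] w[OF i] by (rule mult_left_mono)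
    thus ?thesis using w[OF i] by (simp add: abs_mult algebra_simps)
  qed
  have "2 * \<bar>infsum (\<lambda>i. w i * x i * y i) I\<bar> \<le> 2 * infsum (\<lambda>i. \<bar>w i * x i * y i\<bar>) I"
    using abs_infsum_le_infsum_abs[OF s] by simp
  also have "\<dots> = infsum (\<lambda>i. 2 * \<bar>w i * x i * y i\<bar>) I"
    using infsum_cmult_right'[of 2 "\<lambda>i. \<bar>w i * x i * y i\<bar>" I] by simp
  also have "\<dots> \<le> infsum (\<lambda>i. t * (w i * (x i)\<^sup>2) + (1/t) * (w i * (y i)\<^sup>2)) I"
    using infsum_mono[OF summable_on_cmult_right[OF sa] summable_on_add[OF sx' sy']] pw by blast
  also have "\<dots> = t * infsum (\<lambda>i. w i * (x i)\<^sup>2) I + (1/t) * infsum (\<lambda>i. w i * (y i)\<^sup>2) I"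
    using infsum_add[OF sx' sy'] infsum_cmult_right'[of t "\<lambda>i. w i * (x i)\<^sup>2" I]
      infsum_cmult_right'[of "1/t" "\<lambda>i. w i * (y i)\<^sup>2" I] by simp
  finally show ?thesis by simp
qed

lemma weighted_Cauchy_Schwarz:
  fixes w x y :: "'a \<Rightarrow> real"
  assumes w: "\<And>i. i \<in> I \<Longrightarrow> 0 \<le> w i"
    and sx: "(\<lambda>i. w i * (x i)\<^sup>2) summable_on I" and sy: "(\<lambda>i. w i * (y i)\<^sup>2) summable_on I"
  shows "\<bar>infsum (\<lambda>i. w i * x i * y i) I\<bar>
    \<le> sqrt (infsum (\<lambda>i. w i * (x i)\<^sup>2) I) * sqrt (infsum (\<lambda>i. w i * (y i)\<^sup>2) I)"
proof -
  have "0 \<le> infsum (\<lambda>i. w i * (x i)\<^sup>2) I" "0 \<le> infsum (\<lambda>i. w i * (y i)\<^sup>2) I"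
    using w by (intro infsum_nonneg; simp)+
  from abs_le_sqrt_mult_sqrt[OF this two_abs_weighted_infsum_le[OF w sx sy]] show ?thesis .
qed

lemma weighted_square_sum_increment:
  fixes w x y :: "'a \<Rightarrow> real"
  assumes w: "\<And>i. i \<in> I \<Longrightarrow> 0 \<le> w i"
    and sx: "(\<lambda>i. w i * (x i)\<^sup>2) summable_on I" and sy: "(\<lambda>i. w i * (y i)\<^sup>2) summable_on I"
  shows "\<bar>infsum (\<lambda>i. w i * (y i + x i)\<^sup>2) I - infsum (\<lambda>i. w i * (y i)\<^sup>2) I\<bar>
    \<le> infsum (\<lambda>i. w i * (x i)\<^sup>2) I
       + 2 * (sqrt (infsum (\<lambda>i. w i * (y i)\<^sup>2) I) * sqrt (infsum (\<lambda>i. w i * (x i)\<^sup>2) I))"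
proof -
  have s2: "(\<lambda>i. 2 * (w i * y i * x i)) summable_on I"
    by (rule summable_on_cmult_right[OF weighted_mult_summable[OF w sy sx]])
  have e: "(\<lambda>i. w i * (y i + x i)\<^sup>2) = (\<lambda>i. (w i * (y i)\<^sup>2 + 2 * (w i * y i * x i)) + w i * (x i)\<^sup>2)"
    by (auto simp: power2_eq_square algebra_simps)
  have "infsum (\<lambda>i. w i * (y i + x i)\<^sup>2) I = infsum (\<lambda>i. w i * (y i)\<^sup>2) I
      + 2 * infsum (\<lambda>i. w i * y i * x i) I + infsum (\<lambda>i. w i * (x i)\<^sup>2) I"
    unfolding e using infsum_add[OF summable_on_add[OF sy s2] sx] infsum_add[OF sy s2]
      infsum_cmult_right'[of 2 "\<lambda>i. w i * y i * x i" I] by simp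
  moreover have "\<bar>infsum (\<lambda>i. w i * y i * x i) I\<bar>
      \<le> sqrt (infsum (\<lambda>i. w i * (y i)\<^sup>2) I) * sqrt (infsum (\<lambda>i. w i * (x i)\<^sup>2) I)"
    by (rule weighted_Cauchy_Schwarz[OF w sy sx])
  moreover have "0 \<le> infsum (\<lambda>i. w i * (x i)\<^sup>2) I" using w by (intro infsum_nonneg) simp
  ultimately show ?thesis by (simp add: abs_le_iff)
qed

section \<open>Termwise differentiation of sums over index sets\<close>

text \<open>A uniform-in-time Cauchy criterion for sums over \<open>I \<subseteq> \<nat>\<close>; it replaces uniform
  convergence of the derived series in the termwise differentiation theorem.\<close>

definition uniformly_small_tails :: "nat set \<Rightarrow> real set \<Rightarrow> (nat \<Rightarrow> real \<Rightarrow> real) \<Rightarrow> bool" where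
  "uniformly_small_tails I K a \<longleftrightarrow> (\<forall>\<epsilon>>0. \<exists>N. \<forall>\<tau>\<in>K. \<forall>F.
     finite F \<and> F \<subseteq> I \<and> (\<forall>i\<in>F. N \<le> i) \<longrightarrow> \<bar>\<Sum>i\<in>F. a i \<tau>\<bar> \<le> \<epsilon>)"

definition bounded_partial_sums :: "nat set \<Rightarrow> real set \<Rightarrow> (nat \<Rightarrow> real \<Rightarrow> real) \<Rightarrow> bool" where
  "bounded_partial_sums I K a \<longleftrightarrow> (\<exists>B. \<forall>\<tau>\<in>K. \<forall>F. finite F \<and> F \<subseteq> I \<longrightarrow> (\<Sum>i\<in>F. a i \<tau>) \<le> B)"

lemma has_sum_nonneg_tails_small:
  fixes g :: "nat \<Rightarrow> real"
  assumes hs: "(g has_sum S) I" and nn: "\<And>i. i \<in> I \<Longrightarrow> 0 \<le> g i" and ep: "\<epsilon> > 0"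
  shows "\<exists>N. \<forall>F. finite F \<and> F \<subseteq> I \<and> (\<forall>i\<in>F. N \<le> i) \<longrightarrow> sum g F < \<epsilon>"
proof -
  obtain F0 where F0: "finite F0" "F0 \<subseteq> I" "dist (sum g F0) S \<le> \<epsilon>/2"
    using has_sum_finite_approximation[OF hs, of "\<epsilon>/2"] ep by auto
  define N where "N = Suc (Max (insert 0 F0))"
  have lt: "i < N" if "i \<in> F0" for i
    using F0(1) that unfolding N_def by (simp add: le_imp_less_Suc)
  show ?thesis
  proof (intro exI[of _ N] allI impI)
    fix F assume F: "finite F \<and> F \<subseteq> I \<and> (\<forall>i\<in>F. N \<le> i)"
    have disj: "F0 \<inter> F = {}" using lt F by force
    have "sum g F0 + sum g F = sum g (F0 \<union> F)"
      using F F0 disj by (simp add: sum.union_disjoint)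
    also have "\<dots> \<le> S"
      by (rule finite_sum_le_has_sum[OF hs]) (use F F0 nn in auto)
    finally have "sum g F \<le> S - sum g F0" by simp
    also have "\<dots> \<le> \<epsilon>/2" using F0(3) unfolding dist_real_def by linarith
    finally show "sum g F < \<epsilon>" using ep by simp
  qed
qed

lemma continuous_deviation_small:
  fixes x :: "nat \<Rightarrow> real \<Rightarrow> real"
  assumes dev: "\<And>\<tau> F. \<tau> \<in> K \<Longrightarrow> finite F \<Longrightarrow> F \<subseteq> I \<Longrightarrow> (\<Sum>i\<in>F. (x i \<tau> - x i \<tau>0)\<^sup>2) \<le> (D \<tau>)\<^sup>2"
    and lim: "(D \<longlongrightarrow> 0) (at \<tau>0 within K)" and eta: "\<eta> > 0"
  shows "\<exists>\<delta>>0. \<forall>\<tau>\<in>K. dist \<tau> \<tau>0 < \<delta> \<longrightarrow>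
    (\<forall>F. finite F \<and> F \<subseteq> I \<longrightarrow> (\<Sum>i\<in>F. (x i \<tau> - x i \<tau>0)\<^sup>2) \<le> \<eta>\<^sup>2)"
proof -
  obtain \<delta> where \<delta>: "\<delta> > 0" "\<forall>\<tau>\<in>K. 0 < dist \<tau> \<tau>0 \<and> dist \<tau> \<tau>0 < \<delta> \<longrightarrow> dist (D \<tau>) 0 < \<eta>"
    using lim eta unfolding Lim_within by blast
  have "(\<Sum>i\<in>F. (x i \<tau> - x i \<tau>0)\<^sup>2) \<le> \<eta>\<^sup>2"
    if "\<tau> \<in> K" "dist \<tau> \<tau>0 < \<delta>" "finite F" "F \<subseteq> I" for \<tau> F
  proof (cases "\<tau> = \<tau>0")
    case False
    have "(D \<tau>)\<^sup>2 \<le> \<eta>\<^sup>2"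
    proof -
      have "\<bar>D \<tau>\<bar> \<le> \<eta>" using \<delta>(2) that False by auto
      hence "\<bar>D \<tau>\<bar>\<^sup>2 \<le> \<eta>\<^sup>2" by (intro power_mono) auto
      thus ?thesis by simp
    qed
    thus ?thesis using dev[of \<tau> F] that by linarith
  qed simp
  thus ?thesis using \<delta>(1) by blast
qed

lemma sqrt_sum_square_triangle:
  fixes a b :: "nat \<Rightarrow> real"
  shows "sqrt (\<Sum>i\<in>F. (a i)\<^sup>2) \<le> sqrt (\<Sum>i\<in>F. (b i)\<^sup>2) + sqrt (\<Sum>i\<in>F. (a i - b i)\<^sup>2)"
  using L2_set_triangle_ineq[of b "\<lambda>i. a i - b i" F] by (simp add: L2_set_def)

lemma small_tails_if_continuous:
  fixes x :: "nat \<Rightarrow> real \<Rightarrow> real"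
  assumes K: "compact K"
    and summ: "\<And>\<tau>. \<tau> \<in> K \<Longrightarrow> (\<lambda>i. (x i \<tau>)\<^sup>2) summable_on I"
    and dev: "\<And>\<tau>0 \<tau> F. \<tau>0 \<in> K \<Longrightarrow> \<tau> \<in> K \<Longrightarrow> finite F \<Longrightarrow> F \<subseteq> I \<Longrightarrow>
        (\<Sum>i\<in>F. (x i \<tau> - x i \<tau>0)\<^sup>2) \<le> (D \<tau>0 \<tau>)\<^sup>2"
    and lim: "\<And>\<tau>0. \<tau>0 \<in> K \<Longrightarrow> (D \<tau>0 \<longlongrightarrow> 0) (at \<tau>0 within K)"
  shows "uniformly_small_tails I K (\<lambda>i \<tau>. (x i \<tau>)\<^sup>2)"
  unfolding uniformly_small_tails_def
proof (intro allI impI)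
  fix \<epsilon> :: real assume ep: "\<epsilon> > 0"
  define \<eta> where "\<eta> = sqrt \<epsilon> / 2"
  have eta: "\<eta> > 0" using ep by (simp add: \<eta>_def)
  have "\<forall>\<tau>0\<in>K. \<exists>\<delta>>0. \<forall>\<tau>\<in>K. dist \<tau> \<tau>0 < \<delta> \<longrightarrow>
      (\<forall>F. finite F \<and> F \<subseteq> I \<longrightarrow> (\<Sum>i\<in>F. (x i \<tau> - x i \<tau>0)\<^sup>2) \<le> \<eta>\<^sup>2)"
    using continuous_deviation_small[OF dev lim eta] by blast
  then obtain d where d: "\<And>\<tau>0. \<tau>0 \<in> K \<Longrightarrow> d \<tau>0 > 0 \<and> (\<forall>\<tau>\<in>K. dist \<tau> \<tau>0 < d \<tau>0 \<longrightarrow>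
      (\<forall>F. finite F \<and> F \<subseteq> I \<longrightarrow> (\<Sum>i\<in>F. (x i \<tau> - x i \<tau>0)\<^sup>2) \<le> \<eta>\<^sup>2))"
    by metis
  have "\<exists>N. \<forall>F. finite F \<and> F \<subseteq> I \<and> (\<forall>i\<in>F. N \<le> i) \<longrightarrow> (\<Sum>i\<in>F. (x i \<tau>0)\<^sup>2) < \<eta>\<^sup>2"
    if "\<tau>0 \<in> K" for \<tau>0
    by (rule has_sum_nonneg_tails_small[OF has_sum_infsum[OF summ[OF that]]]) (use eta in auto)
  then obtain Nf where Nf: "\<And>\<tau>0 F. \<tau>0 \<in> K \<Longrightarrow> finite F \<and> F \<subseteq> I \<and> (\<forall>i\<in>F. Nf \<tau>0 \<le> i) \<Longrightarrow>
      (\<Sum>i\<in>F. (x i \<tau>0)\<^sup>2) < \<eta>\<^sup>2"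
    by metis
  have cov: "K \<subseteq> (\<Union>\<tau>0\<in>K. ball \<tau>0 (d \<tau>0))" using d by force
  obtain C where C: "C \<subseteq> K" "finite C" "K \<subseteq> (\<Union>\<tau>0\<in>C. ball \<tau>0 (d \<tau>0))"
    using compactE_image[OF K _ cov] by blast
  define N where "N = Max (insert 0 (Nf ` C))"
  show "\<exists>N. \<forall>\<tau>\<in>K. \<forall>F. finite F \<and> F \<subseteq> I \<and> (\<forall>i\<in>F. N \<le> i) \<longrightarrow> \<bar>\<Sum>i\<in>F. (x i \<tau>)\<^sup>2\<bar> \<le> \<epsilon>"
  proof (intro exI[of _ N] ballI allI impI)
    fix \<tau> F assume tK: "\<tau> \<in> K" and F: "finite F \<and> F \<subseteq> I \<and> (\<forall>i\<in>F. N \<le> i)"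
    obtain \<tau>0 where t0: "\<tau>0 \<in> C" "dist \<tau>0 \<tau> < d \<tau>0" using C(3) tK by auto
    have t0K: "\<tau>0 \<in> K" using t0 C by auto
    have "Nf \<tau>0 \<le> N" unfolding N_def using C(2) t0(1) by (intro Max_ge) auto
    hence s1: "(\<Sum>i\<in>F. (x i \<tau>0)\<^sup>2) < \<eta>\<^sup>2" using Nf[OF t0K] F by fastforce
    have s2: "(\<Sum>i\<in>F. (x i \<tau> - x i \<tau>0)\<^sup>2) \<le> \<eta>\<^sup>2"
      using d[OF t0K] tK t0(2) F by (simp add: dist_commute)
    have "sqrt (\<Sum>i\<in>F. (x i \<tau>)\<^sup>2) \<le> sqrt (\<Sum>i\<in>F. (x i \<tau>0)\<^sup>2) + sqrt (\<Sum>i\<in>F. (x i \<tau> - x i \<tau>0)\<^sup>2)"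
      by (rule sqrt_sum_square_triangle)
    also have "\<dots> \<le> \<eta> + \<eta>"
      using s1 s2 eta real_sqrt_le_mono[of _ "\<eta>\<^sup>2"] by (intro add_mono) (auto simp: less_imp_le)
    also have "\<dots> = sqrt \<epsilon>" by (simp add: \<eta>_def)
    finally have "(\<Sum>i\<in>F. (x i \<tau>)\<^sup>2) \<le> \<epsilon>" by simp
    thus "\<bar>\<Sum>i\<in>F. (x i \<tau>)\<^sup>2\<bar> \<le> \<epsilon>" by (simp add: sum_nonneg)
  qed
qed

lemma bounded_partial_sums_if_continuous:
  fixes x :: "nat \<Rightarrow> real \<Rightarrow> real"
  assumes K: "compact K"
    and summ: "\<And>\<tau>. \<tau> \<in> K \<Longrightarrow> (\<lambda>i. (x i \<tau>)\<^sup>2) summable_on I"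
    and dev: "\<And>\<tau>0 \<tau> F. \<tau>0 \<in> K \<Longrightarrow> \<tau> \<in> K \<Longrightarrow> finite F \<Longrightarrow> F \<subseteq> I \<Longrightarrow>
        (\<Sum>i\<in>F. (x i \<tau> - x i \<tau>0)\<^sup>2) \<le> (D \<tau>0 \<tau>)\<^sup>2"
    and lim: "\<And>\<tau>0. \<tau>0 \<in> K \<Longrightarrow> (D \<tau>0 \<longlongrightarrow> 0) (at \<tau>0 within K)"
  shows "bounded_partial_sums I K (\<lambda>i \<tau>. (x i \<tau>)\<^sup>2)"
  unfolding bounded_partial_sums_def
proof -
  have "\<forall>\<tau>0\<in>K. \<exists>\<delta>>0. \<forall>\<tau>\<in>K. dist \<tau> \<tau>0 < \<delta> \<longrightarrow>
      (\<forall>F. finite F \<and> F \<subseteq> I \<longrightarrow> (\<Sum>i\<in>F. (x i \<tau> - x i \<tau>0)\<^sup>2) \<le> 1\<^sup>2)"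
    using continuous_deviation_small[OF dev lim zero_less_one] by blast
  then obtain d where d: "\<And>\<tau>0. \<tau>0 \<in> K \<Longrightarrow> d \<tau>0 > 0 \<and> (\<forall>\<tau>\<in>K. dist \<tau> \<tau>0 < d \<tau>0 \<longrightarrow>
      (\<forall>F. finite F \<and> F \<subseteq> I \<longrightarrow> (\<Sum>i\<in>F. (x i \<tau> - x i \<tau>0)\<^sup>2) \<le> 1\<^sup>2))"
    by metis
  have cov: "K \<subseteq> (\<Union>\<tau>0\<in>K. ball \<tau>0 (d \<tau>0))" using d by force
  obtain C where C: "C \<subseteq> K" "finite C" "K \<subseteq> (\<Union>\<tau>0\<in>C. ball \<tau>0 (d \<tau>0))"
    using compactE_image[OF K _ cov] by blast
  define Bf where "Bf \<tau>0 = (sqrt (infsum (\<lambda>i. (x i \<tau>0)\<^sup>2) I) + 1)\<^sup>2" for \<tau>0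
  define B where "B = Max (insert 0 (Bf ` C))"
  show "\<exists>B. \<forall>\<tau>\<in>K. \<forall>F. finite F \<and> F \<subseteq> I \<longrightarrow> (\<Sum>i\<in>F. (x i \<tau>)\<^sup>2) \<le> B"
  proof (intro exI[of _ B] ballI allI impI)
    fix \<tau> F assume tK: "\<tau> \<in> K" and F: "finite F \<and> F \<subseteq> I"
    obtain \<tau>0 where t0: "\<tau>0 \<in> C" "dist \<tau>0 \<tau> < d \<tau>0" using C(3) tK by auto
    have t0K: "\<tau>0 \<in> K" using t0 C by auto
    have BfB: "Bf \<tau>0 \<le> B" unfolding B_def using C(2) t0(1) by (intro Max_ge) auto
    have s1: "(\<Sum>i\<in>F. (x i \<tau>0)\<^sup>2) \<le> infsum (\<lambda>i. (x i \<tau>0)\<^sup>2) I"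
      using F by (intro finite_sum_le_infsum summ t0K) auto
    have s2: "(\<Sum>i\<in>F. (x i \<tau> - x i \<tau>0)\<^sup>2) \<le> 1"
      using d[OF t0K] tK t0(2) F by (simp add: dist_commute)
    have "sqrt (\<Sum>i\<in>F. (x i \<tau>)\<^sup>2) \<le> sqrt (\<Sum>i\<in>F. (x i \<tau>0)\<^sup>2) + sqrt (\<Sum>i\<in>F. (x i \<tau> - x i \<tau>0)\<^sup>2)"
      by (rule sqrt_sum_square_triangle)
    also have "\<dots> \<le> sqrt (infsum (\<lambda>i. (x i \<tau>0)\<^sup>2) I) + 1"
      using s1 s2 by (intro add_mono) auto
    finally have "(sqrt (\<Sum>i\<in>F. (x i \<tau>)\<^sup>2))\<^sup>2 \<le> Bf \<tau>0"
      unfolding Bf_def by (intro power_mono) (auto simp: sum_nonneg)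
    thus "(\<Sum>i\<in>F. (x i \<tau>)\<^sup>2) \<le> B" using BfB sum_nonneg[of F "\<lambda>i. (x i \<tau>)\<^sup>2"] by simp
  qed
qed

lemma small_tails_mult:
  fixes x y :: "nat \<Rightarrow> real \<Rightarrow> real"
  assumes ux: "uniformly_small_tails I K (\<lambda>i \<tau>. (x i \<tau>)\<^sup>2)"
    and yb: "bounded_partial_sums I K (\<lambda>i \<tau>. (y i \<tau>)\<^sup>2)"
  shows "uniformly_small_tails I K (\<lambda>i \<tau>. x i \<tau> * y i \<tau>)"
  unfolding uniformly_small_tails_def
proof (intro allI impI)
  fix \<epsilon> :: real assume ep: "\<epsilon> > 0"
  obtain B where B: "\<And>\<tau> F. \<tau> \<in> K \<Longrightarrow> finite F \<and> F \<subseteq> I \<Longrightarrow> (\<Sum>i\<in>F. (y i \<tau>)\<^sup>2) \<le> B"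
    using yb unfolding bounded_partial_sums_def by blast
  define B' where "B' = \<bar>B\<bar> + 1"
  have B'p: "B' > 0" by (simp add: B'_def)
  obtain N where N: "\<And>\<tau> F. \<tau> \<in> K \<Longrightarrow> finite F \<and> F \<subseteq> I \<and> (\<forall>i\<in>F. N \<le> i) \<Longrightarrow>
      \<bar>\<Sum>i\<in>F. (x i \<tau>)\<^sup>2\<bar> \<le> \<epsilon>\<^sup>2 / B'"
    using ux ep B'p unfolding uniformly_small_tails_def by (meson divide_pos_pos zero_less_power)
  show "\<exists>N. \<forall>\<tau>\<in>K. \<forall>F. finite F \<and> F \<subseteq> I \<and> (\<forall>i\<in>F. N \<le> i) \<longrightarrow> \<bar>\<Sum>i\<in>F. x i \<tau> * y i \<tau>\<bar> \<le> \<epsilon>"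
  proof (intro exI[of _ N] ballI allI impI)
    fix \<tau> F assume tK: "\<tau> \<in> K" and F: "finite F \<and> F \<subseteq> I \<and> (\<forall>i\<in>F. N \<le> i)"
    have "\<bar>\<Sum>i\<in>F. x i \<tau> * y i \<tau>\<bar> \<le> (\<Sum>i\<in>F. \<bar>x i \<tau>\<bar> * \<bar>y i \<tau>\<bar>)"
      using sum_abs[of "\<lambda>i. x i \<tau> * y i \<tau>" F] by (simp add: abs_mult)
    also have "\<dots> \<le> L2_set (\<lambda>i. x i \<tau>) F * L2_set (\<lambda>i. y i \<tau>) F" by (rule L2_set_mult_ineq)
    also have "\<dots> \<le> sqrt (\<epsilon>\<^sup>2 / B') * sqrt B'"
    proof (intro mult_mono)
      have "(\<Sum>i\<in>F. (x i \<tau>)\<^sup>2) \<le> \<epsilon>\<^sup>2 / B'" using N[OF tK F] by simp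
      thus "L2_set (\<lambda>i. x i \<tau>) F \<le> sqrt (\<epsilon>\<^sup>2 / B')" unfolding L2_set_def by simp
      have "(\<Sum>i\<in>F. (y i \<tau>)\<^sup>2) \<le> B'" using B[OF tK] F unfolding B'_def by force
      thus "L2_set (\<lambda>i. y i \<tau>) F \<le> sqrt B'" unfolding L2_set_def by simp
    qed (use B'p in auto)
    also have "\<dots> = \<epsilon>" using B'p ep by (simp add: real_sqrt_divide)
    finally show "\<bar>\<Sum>i\<in>F. x i \<tau> * y i \<tau>\<bar> \<le> \<epsilon>" .
  qed
qed

lemma small_tails_add:
  assumes "uniformly_small_tails I K a" "uniformly_small_tails I K b"
  shows "uniformly_small_tails I K (\<lambda>i \<tau>. a i \<tau> + b i \<tau>)"
  unfolding uniformly_small_tails_def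
proof (intro allI impI)
  fix \<epsilon> :: real assume ep: "\<epsilon> > 0"
  obtain N1 where N1: "\<And>\<tau> F. \<tau> \<in> K \<Longrightarrow> finite F \<and> F \<subseteq> I \<and> (\<forall>i\<in>F. N1 \<le> i) \<Longrightarrow>
      \<bar>\<Sum>i\<in>F. a i \<tau>\<bar> \<le> \<epsilon>/2"
    using assms(1) ep unfolding uniformly_small_tails_def by (meson half_gt_zero)
  obtain N2 where N2: "\<And>\<tau> F. \<tau> \<in> K \<Longrightarrow> finite F \<and> F \<subseteq> I \<and> (\<forall>i\<in>F. N2 \<le> i) \<Longrightarrow>
      \<bar>\<Sum>i\<in>F. b i \<tau>\<bar> \<le> \<epsilon>/2"
    using assms(2) ep unfolding uniformly_small_tails_def by (meson half_gt_zero)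
  show "\<exists>N. \<forall>\<tau>\<in>K. \<forall>F. finite F \<and> F \<subseteq> I \<and> (\<forall>i\<in>F. N \<le> i) \<longrightarrow> \<bar>\<Sum>i\<in>F. a i \<tau> + b i \<tau>\<bar> \<le> \<epsilon>"
  proof (intro exI[of _ "max N1 N2"] ballI allI impI)
    fix \<tau> F assume tK: "\<tau> \<in> K" and F: "finite F \<and> F \<subseteq> I \<and> (\<forall>i\<in>F. max N1 N2 \<le> i)"
    have "\<bar>\<Sum>i\<in>F. a i \<tau>\<bar> \<le> \<epsilon>/2" using N1[OF tK] F by auto
    moreover have "\<bar>\<Sum>i\<in>F. b i \<tau>\<bar> \<le> \<epsilon>/2" using N2[OF tK] F by auto
    ultimately show "\<bar>\<Sum>i\<in>F. a i \<tau> + b i \<tau>\<bar> \<le> \<epsilon>" by (simp add: sum.distrib)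
  qed
qed

lemma small_tails_scale:
  assumes "uniformly_small_tails I K a" and g: "\<And>\<tau>. \<tau> \<in> K \<Longrightarrow> \<bar>g \<tau>\<bar> \<le> C"
  shows "uniformly_small_tails I K (\<lambda>i \<tau>. g \<tau> * a i \<tau>)"
  unfolding uniformly_small_tails_def
proof (intro allI impI)
  fix \<epsilon> :: real assume ep: "\<epsilon> > 0"
  define C' where "C' = \<bar>C\<bar> + 1"
  have C'p: "C' > 0" by (simp add: C'_def)
  obtain N where N: "\<And>\<tau> F. \<tau> \<in> K \<Longrightarrow> finite F \<and> F \<subseteq> I \<and> (\<forall>i\<in>F. N \<le> i) \<Longrightarrow>
      \<bar>\<Sum>i\<in>F. a i \<tau>\<bar> \<le> \<epsilon> / C'"
    using assms(1) ep C'p unfolding uniformly_small_tails_def by (meson divide_pos_pos)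
  show "\<exists>N. \<forall>\<tau>\<in>K. \<forall>F. finite F \<and> F \<subseteq> I \<and> (\<forall>i\<in>F. N \<le> i) \<longrightarrow> \<bar>\<Sum>i\<in>F. g \<tau> * a i \<tau>\<bar> \<le> \<epsilon>"
  proof (intro exI[of _ N] ballI allI impI)
    fix \<tau> F assume tK: "\<tau> \<in> K" and F: "finite F \<and> F \<subseteq> I \<and> (\<forall>i\<in>F. N \<le> i)"
    have "\<bar>\<Sum>i\<in>F. g \<tau> * a i \<tau>\<bar> = \<bar>g \<tau>\<bar> * \<bar>\<Sum>i\<in>F. a i \<tau>\<bar>"
      by (simp add: sum_distrib_left[symmetric] abs_mult)
    also have "\<dots> \<le> C' * (\<epsilon> / C')"
      using g[OF tK] N[OF tK F] by (intro mult_mono) (auto simp: C'_def)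
    also have "\<dots> = \<epsilon>" using C'p by simp
    finally show "\<bar>\<Sum>i\<in>F. g \<tau> * a i \<tau>\<bar> \<le> \<epsilon>" .
  qed
qed

lemma small_tails_cong:
  assumes "uniformly_small_tails I K a" and "\<And>i \<tau>. i \<in> I \<Longrightarrow> \<tau> \<in> K \<Longrightarrow> a i \<tau> = b i \<tau>"
  shows "uniformly_small_tails I K b"
proof -
  have "sum (\<lambda>i. a i \<tau>) F = sum (\<lambda>i. b i \<tau>) F" if "\<tau> \<in> K" "F \<subseteq> I" for \<tau> F
    using assms(2) that by (intro sum.cong) auto
  thus ?thesis using assms(1) unfolding uniformly_small_tails_def by metis
qed

lemma bounded_partial_sums_le:
  assumes "bounded_partial_sums I K b" and C: "C > 0"
    and le: "\<And>i \<tau>. i \<in> I \<Longrightarrow> \<tau> \<in> K \<Longrightarrow> a i \<tau> \<le> C * b i \<tau>"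
  shows "bounded_partial_sums I K a"
proof -
  obtain B where B: "\<And>\<tau> F. \<tau> \<in> K \<Longrightarrow> finite F \<and> F \<subseteq> I \<Longrightarrow> (\<Sum>i\<in>F. b i \<tau>) \<le> B"
    using assms(1) unfolding bounded_partial_sums_def by blast
  have "(\<Sum>i\<in>F. a i \<tau>) \<le> C * B" if "\<tau> \<in> K" "finite F \<and> F \<subseteq> I" for \<tau> F
  proof -
    have "(\<Sum>i\<in>F. a i \<tau>) \<le> (\<Sum>i\<in>F. C * b i \<tau>)" using le that by (intro sum_mono) auto
    also have "\<dots> \<le> C * B" using B[OF that] C by (simp add: sum_distrib_left[symmetric])
    finally show ?thesis .
  qed
  thus ?thesis unfolding bounded_partial_sums_def by blast
qed

lemma bounded_partial_sums_add:
  assumes "bounded_partial_sums I K a" "bounded_partial_sums I K b"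
  shows "bounded_partial_sums I K (\<lambda>i \<tau>. a i \<tau> + b i \<tau>)"
proof -
  obtain A where A: "\<And>\<tau> F. \<tau> \<in> K \<Longrightarrow> finite F \<and> F \<subseteq> I \<Longrightarrow> (\<Sum>i\<in>F. a i \<tau>) \<le> A"
    using assms(1) unfolding bounded_partial_sums_def by blast
  obtain B where B: "\<And>\<tau> F. \<tau> \<in> K \<Longrightarrow> finite F \<and> F \<subseteq> I \<Longrightarrow> (\<Sum>i\<in>F. b i \<tau>) \<le> B"
    using assms(2) unfolding bounded_partial_sums_def by blast
  show ?thesis unfolding bounded_partial_sums_def
    using A B by (intro exI[of _ "A + B"]) (auto simp: sum.distrib intro: add_mono)
qed

lemma bounded_partial_sums_const:
  fixes y :: "nat \<Rightarrow> real"
  assumes "(\<lambda>i. (y i)\<^sup>2) summable_on I"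
  shows "bounded_partial_sums I K (\<lambda>i \<tau>. (y i)\<^sup>2)"
  unfolding bounded_partial_sums_def using assms
  by (intro exI[of _ "infsum (\<lambda>i. (y i)\<^sup>2) I"] ballI allI impI finite_sum_le_infsum) auto

lemma sums_if_has_sum:
  fixes g :: "nat \<Rightarrow> real"
  assumes "(g has_sum s) I"
  shows "(\<lambda>n. if n \<in> I then g n else 0) sums s"
proof -
  have "((\<lambda>n. if n \<in> I then g n else 0) has_sum s) UNIV"
    using assms by (subst has_sum_cong_neutral[where T = I]) auto
  thus ?thesis by (rule has_sum_imp_sums)
qed

lemma uniform_limit_partial_sums_if_small_tails:
  fixes a :: "nat \<Rightarrow> real \<Rightarrow> real" and A :: "real \<Rightarrow> real"
  assumes hs: "\<And>\<tau>. \<tau> \<in> K \<Longrightarrow> ((\<lambda>i. a i \<tau>) has_sum A \<tau>) I"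
    and tails: "uniformly_small_tails I K a"
  shows "uniform_limit K (\<lambda>n \<tau>. \<Sum>i<n. if i \<in> I then a i \<tau> else 0) A sequentially"
  unfolding uniform_limit_sequentially_iff
proof (intro allI impI)
  fix \<epsilon> :: real assume ep: "\<epsilon> > 0"
  define s where "s n \<tau> = (\<Sum>i<n. if i \<in> I then a i \<tau> else 0)" for n \<tau>
  obtain N where N: "\<And>\<tau> F. \<tau> \<in> K \<Longrightarrow> finite F \<and> F \<subseteq> I \<and> (\<forall>i\<in>F. N \<le> i) \<Longrightarrow>
      \<bar>\<Sum>i\<in>F. a i \<tau>\<bar> \<le> \<epsilon>/2"
    using tails ep unfolding uniformly_small_tails_def by (meson half_gt_zero)
  have "dist (s n \<tau>) (A \<tau>) < \<epsilon>" if n: "N \<le> n" and \<tau>: "\<tau> \<in> K" for n \<tau>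
  proof -
    have lim: "(\<lambda>m. \<bar>s m \<tau> - s n \<tau>\<bar>) \<longlonglongrightarrow> \<bar>A \<tau> - s n \<tau>\<bar>"
      using sums_if_has_sum[OF hs[OF \<tau>]] unfolding sums_def s_def by (intro tendsto_intros)
    have "\<bar>A \<tau> - s n \<tau>\<bar> \<le> \<epsilon>/2"
    proof (rule LIMSEQ_le_const2[OF lim], intro exI[of _ n] allI impI)
      fix m assume m: "n \<le> m"
      have "s m \<tau> - s n \<tau> = (\<Sum>i\<in>{n..<m} \<inter> I. a i \<tau>)"
        using sum_diff_nat_ivl[of 0 n m "\<lambda>i. if i \<in> I then a i \<tau> else 0"] m
        by (simp add: s_def atLeast0LessThan sum.inter_restrict)
      thus "\<bar>s m \<tau> - s n \<tau>\<bar> \<le> \<epsilon>/2" using N[OF \<tau>, of "{n..<m} \<inter> I"] n by auto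
    qed
    thus ?thesis using ep by (simp add: dist_real_def abs_minus_commute)
  qed
  thus "\<exists>N. \<forall>n\<ge>N. \<forall>\<tau>\<in>K. dist (\<Sum>i<n. if i \<in> I then a i \<tau> else 0) (A \<tau>) < \<epsilon>"
    unfolding s_def by blast
qed

lemma has_real_derivative_has_sum_termwise:
  fixes a a' :: "nat \<Rightarrow> real \<Rightarrow> real" and A A' :: "real \<Rightarrow> real"
  assumes der: "\<And>i \<tau>. i \<in> I \<Longrightarrow> 0 \<le> \<tau> \<Longrightarrow> (a i has_real_derivative a' i \<tau>) (at \<tau> within {0..})"
    and hs: "\<And>\<tau>. 0 \<le> \<tau> \<Longrightarrow> ((\<lambda>i. a i \<tau>) has_sum A \<tau>) I"
    and hs': "\<And>\<tau>. 0 \<le> \<tau> \<Longrightarrow> ((\<lambda>i. a' i \<tau>) has_sum A' \<tau>) I"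
    and tails: "\<And>T. uniformly_small_tails I {0..T} a'"
    and t: "0 \<le> t"
  shows "(A has_real_derivative A' t) (at t within {0..})"
proof -
  define S where "S = {0..t + 1}"
  define b where "b n x = (if n \<in> I then a n x else 0)" for n x
  define b' where "b' n x = (if n \<in> I then a' n x else 0)" for n x
  have tS: "t \<in> S" using t by (simp add: S_def)
  have sums: "(\<lambda>n. b n x) sums A x" if "x \<in> S" for x
    using sums_if_has_sum[OF hs] that unfolding b_def S_def by simp
  have deriv: "(b n has_real_derivative b' n x) (at x within S)" if "x \<in> S" for n x
  proof (cases "n \<in> I")
    case True
    hence "b n = a n" by (auto simp: b_def)
    thus ?thesis using DERIV_subset[OF der[OF True], of x S] True that by (auto simp: b'_def S_def)
  next
    case False
    hence "b n = (\<lambda>_. 0)" by (auto simp: b_def)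
    thus ?thesis using False by (simp add: b'_def)
  qed
  have ul: "uniform_limit S (\<lambda>n x. \<Sum>i<n. b' i x) A' sequentially"
    unfolding b'_def S_def by (rule uniform_limit_partial_sums_if_small_tails[OF hs' tails]) simp
  have "\<exists>g. \<forall>x\<in>S. (\<lambda>n. b n x) sums g x \<and> (g has_real_derivative A' x) (at x within S)"
    by (rule has_field_derivative_series[OF _ deriv ul tS sums_summable[OF sums[OF tS]]])
      (simp add: S_def)
  then obtain g where g: "\<And>x. x \<in> S \<Longrightarrow> (\<lambda>n. b n x) sums g x \<and> (g has_real_derivative A' x) (at x within S)"
    by blast
  have "(A has_real_derivative A' t) (at t within S)"
    using has_field_derivative_transform_within[OF conjunct2[OF g[OF tS]], of 1] tS g sums
    by (auto intro: sums_unique2)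
  moreover have "at t within S = at t within {0..}"
    by (rule at_within_nhd[of t "{..<t + 1}"]) (auto simp: S_def)
  ultimately show ?thesis by simp
qed

lemma has_real_derivative_zero_squeeze:
  fixes R H :: "real \<Rightarrow> real"
  assumes H: "(H has_real_derivative 0) (at t within X)" and Ht: "H t = 0" and Rt: "R t = 0"
    and le: "\<And>s. s \<in> X \<Longrightarrow> \<bar>R s\<bar> \<le> H s"
  shows "(R has_real_derivative 0) (at t within X)"
proof -
  have "((\<lambda>y. H y / (y - t)) \<longlongrightarrow> 0) (at t within X)"
    using H Ht by (simp add: has_field_derivative_iff)
  hence l: "((\<lambda>y. \<bar>H y / (y - t)\<bar>) \<longlongrightarrow> 0) (at t within X)" by (rule tendsto_rabs_zero)
  have "((\<lambda>y. (R y - R t) / (y - t)) \<longlongrightarrow> 0) (at t within X)"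
  proof (rule Lim_null_comparison[OF _ l])
    show "\<forall>\<^sub>F y in at t within X. norm ((R y - R t) / (y - t)) \<le> \<bar>H y / (y - t)\<bar>"
      unfolding eventually_at_filter
    proof (rule always_eventually, intro allI impI)
      fix y assume "y \<noteq> t" "y \<in> X"
      hence "\<bar>R y\<bar> \<le> \<bar>H y\<bar>" using le[of y] by simp
      thus "norm ((R y - R t) / (y - t)) \<le> \<bar>H y / (y - t)\<bar>"
        using Rt by (simp add: divide_right_mono)
    qed
  qed
  thus ?thesis by (simp add: has_field_derivative_iff)
qed

section \<open>The spectral setting\<close>

locale spectral_basis =
  fixes M :: "'w measure" and I :: "nat set" and e :: "nat \<Rightarrow> 'w \<Rightarrow> real" and lam :: "nat \<Rightarrow> real"
  assumes spectral: "spectral_setting M I e lam"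
begin

lemma e_L2: "i \<in> I \<Longrightarrow> e i \<in> L2 M"
  using spectral by (simp add: spectral_setting_def)

lemma lam_pos: "i \<in> I \<Longrightarrow> lam i > 0"
  using spectral by (simp add: spectral_setting_def)

lemma lam_bounded_below: "\<exists>m>0. \<forall>i\<in>I. m \<le> lam i"
proof (cases "I = {}")
  case False
  then obtain i0 where i0: "i0 \<in> I" by auto
  define J where "J = {i\<in>I. lam i \<le> lam i0}"
  have fJ: "finite J" using spectral unfolding J_def spectral_setting_def by blast
  have i0J: "i0 \<in> J" using i0 by (simp add: J_def)
  define m where "m = Min (lam ` J)"
  have "m \<in> lam ` J" unfolding m_def using fJ i0J by (intro Min_in) auto
  hence "m > 0" using lam_pos by (auto simp: J_def)
  moreover have "m \<le> lam i" if i: "i \<in> I" for i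
  proof (cases "lam i \<le> lam i0")
    case True thus ?thesis using fJ i unfolding m_def by (intro Min_le) (auto simp: J_def)
  next
    case False
    have "m \<le> lam i0" using fJ i0J unfolding m_def by (intro Min_le) auto
    thus ?thesis using False by simp
  qed
  ultimately show ?thesis by blast
qed (intro exI[of _ 1]; simp)

definition lam_min :: real where
  "lam_min = (SOME m. m > 0 \<and> (\<forall>i\<in>I. m \<le> lam i))"

lemma lam_min_pos: "lam_min > 0"
  and lam_min_le: "i \<in> I \<Longrightarrow> lam_min \<le> lam i"
  using someI_ex[OF lam_bounded_below] unfolding lam_min_def by auto

lemma has_sum_coef_square:
  assumes u: "u \<in> L2 M"
  shows "((\<lambda>i. (coef M e u i)\<^sup>2) has_sum ip M u u) I"
  using spectral u by (simp add: spectral_setting_def nrm_square coef_def)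

lemma coef_add:
  "u \<in> L2 M \<Longrightarrow> w \<in> L2 M \<Longrightarrow> i \<in> I \<Longrightarrow> coef M e (\<lambda>x. u x + w x) i = coef M e u i + coef M e w i"
  by (simp add: coef_def ip_add_left e_L2)

lemma coef_diff:
  "u \<in> L2 M \<Longrightarrow> w \<in> L2 M \<Longrightarrow> i \<in> I \<Longrightarrow> coef M e (u - w) i = coef M e u i - coef M e w i"
  by (simp add: coef_def ip_diff_left e_L2)

lemma coef_cong_AE:
  "AE x in M. u x = w x \<Longrightarrow> u \<in> L2 M \<Longrightarrow> w \<in> L2 M \<Longrightarrow> i \<in> I \<Longrightarrow> coef M e u i = coef M e w i"
  unfolding coef_def by (rule ip_cong_AE) (auto simp: e_L2)

text \<open>Polarisation of Parseval's identity.\<close>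

lemma has_sum_coef_mult:
  assumes u: "u \<in> L2 M" and w: "w \<in> L2 M"
  shows "((\<lambda>i. coef M e u i * coef M e w i) has_sum ip M u w) I"
proof -
  define a where "a = (\<lambda>x. u x + w x)"
  have aL: "a \<in> L2 M" unfolding a_def using L2_add u w .
  have bL: "u - w \<in> L2 M" using L2_diff u w .
  have h1: "((\<lambda>i. (coef M e u i + coef M e w i)\<^sup>2) has_sum ip M a a) I"
    using has_sum_coef_square[OF aL] coef_add[OF u w] unfolding a_def by (simp cong: has_sum_cong)
  have h2: "((\<lambda>i. (coef M e u i - coef M e w i)\<^sup>2) has_sum ip M (u - w) (u - w)) I"
    using has_sum_coef_square[OF bL] coef_diff[OF u w] by (simp cong: has_sum_cong)
  have ia: "ip M a a = ip M u u + 2 * ip M u w + ip M w w"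
    using ip_add_left[OF u w aL] ip_add_left[OF u w u] ip_add_left[OF u w w]
      ip_commute[of M u a] ip_commute[of M w a] ip_commute[of M w u] unfolding a_def by simp
  have ib: "ip M (u - w) (u - w) = ip M u u - 2 * ip M u w + ip M w w"
    using ip_diff_left[OF u w bL] ip_diff_left[OF u w u] ip_diff_left[OF u w w]
      ip_commute[of M u "u - w"] ip_commute[of M w "u - w"] ip_commute[of M w u] by simp
  have "((\<lambda>i. (1/4) * ((coef M e u i + coef M e w i)\<^sup>2 - (coef M e u i - coef M e w i)\<^sup>2)) has_sum
      (1/4) * (ip M a a - ip M (u - w) (u - w))) I"
    using has_sum_cmult_right[OF has_sum_diff[OF h1 h2]] .
  moreover have "(1/4) * (ip M a a - ip M (u - w) (u - w)) = ip M u w" using ia ib by simp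
  moreover have "(1/4) * ((x + y)\<^sup>2 - (x - y)\<^sup>2) = x * y" for x y :: real
    by (simp add: power2_eq_square algebra_simps)
  ultimately show ?thesis by simp
qed

lemma coef_square_le:
  assumes u: "u \<in> L2 M" and i: "i \<in> I"
  shows "(coef M e u i)\<^sup>2 \<le> ip M u u"
  using finite_sum_le_has_sum[OF has_sum_coef_square[OF u], of "{i}"] i by simp

lemma sum_coef_square_le:
  assumes u: "u \<in> L2 M" and F: "finite F" "F \<subseteq> I"
  shows "(\<Sum>i\<in>F. (coef M e u i)\<^sup>2) \<le> (nrm M u)\<^sup>2"
  using finite_sum_le_has_sum[OF has_sum_coef_square[OF u]] F by (simp add: nrm_square)

definition sqnorm2 :: "('w \<Rightarrow> real) \<Rightarrow> real" where
  "sqnorm2 u = infsum (\<lambda>i. lam i * (coef M e u i)\<^sup>2) I"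

definition sqnorm1 :: "('w \<Rightarrow> real) \<Rightarrow> real" where
  "sqnorm1 u = infsum (\<lambda>i. sqrt (lam i) * (coef M e u i)\<^sup>2) I"

lemma sqnorm2_nonneg: "0 \<le> sqnorm2 u"
  unfolding sqnorm2_def using lam_pos by (intro infsum_nonneg mult_nonneg_nonneg) (auto intro: less_imp_le)

lemma sqnorm1_nonneg: "0 \<le> sqnorm1 u"
  unfolding sqnorm1_def using lam_pos by (intro infsum_nonneg mult_nonneg_nonneg) (auto intro: less_imp_le)

lemma nrm_r2_eq: "nrm_r M I e lam 2 u = sqrt (sqnorm2 u)"
  unfolding nrm_r_def sqnorm2_def using lam_pos
  by (auto intro!: arg_cong[where f = sqrt] infsum_cong simp: less_imp_le)

lemma nrm_r1_eq: "nrm_r M I e lam 1 u = sqrt (sqnorm1 u)"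
  unfolding nrm_r_def sqnorm1_def using lam_pos
  by (auto intro!: arg_cong[where f = sqrt] infsum_cong simp: less_imp_le powr_half_sqrt)

lemma nrm_r2_square: "(nrm_r M I e lam 2 u)\<^sup>2 = sqnorm2 u"
  using sqnorm2_nonneg nrm_r2_eq by simp

lemma nrm_r1_square: "(nrm_r M I e lam 1 u)\<^sup>2 = sqnorm1 u"
  using sqnorm1_nonneg nrm_r1_eq by simp

lemma H2_iff: "u \<in> Hr M I e lam 2 \<longleftrightarrow> u \<in> L2 M \<and> (\<lambda>i. lam i * (coef M e u i)\<^sup>2) summable_on I"
proof -
  have "(\<lambda>i. lam i powr (2/2) * (coef M e u i)\<^sup>2) summable_on I
      \<longleftrightarrow> (\<lambda>i. lam i * (coef M e u i)\<^sup>2) summable_on I"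
    using lam_pos by (intro summable_on_cong) (auto simp: less_imp_le)
  thus ?thesis unfolding Hr_def by simp
qed

lemma H2_imp_L2: "u \<in> Hr M I e lam 2 \<Longrightarrow> u \<in> L2 M"
  using H2_iff by simp

lemma has_sum_sqnorm2: "u \<in> Hr M I e lam 2 \<Longrightarrow> ((\<lambda>i. lam i * (coef M e u i)\<^sup>2) has_sum sqnorm2 u) I"
  unfolding sqnorm2_def using H2_iff by simp

lemma square_sqrt_lam_mult: "i \<in> I \<Longrightarrow> (sqrt (lam i) * x)\<^sup>2 = lam i * x\<^sup>2"
  using lam_pos by (simp add: power_mult_distrib less_imp_le)

lemma H2_summable_sqrt_lam: "u \<in> Hr M I e lam 2 \<Longrightarrow> (\<lambda>i. (sqrt (lam i) * coef M e u i)\<^sup>2) summable_on I"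
  using H2_iff[of u] by (simp add: square_sqrt_lam_mult cong: summable_on_cong)

lemma sum_lam_coef_square_le:
  assumes u: "u \<in> Hr M I e lam 2" and F: "finite F" "F \<subseteq> I"
  shows "(\<Sum>i\<in>F. lam i * (coef M e u i)\<^sup>2) \<le> (nrm_r M I e lam 2 u)\<^sup>2"
  unfolding nrm_r2_square using F lam_pos
  by (intro finite_sum_le_has_sum[OF has_sum_sqnorm2[OF u]]) (auto simp: less_imp_le)

lemma sqrt_lam_square_le: "i \<in> I \<Longrightarrow> sqrt (lam i) * x\<^sup>2 \<le> (1 / sqrt lam_min) * (lam i * x\<^sup>2)"
proof -
  assume i: "i \<in> I"
  have "sqrt lam_min * sqrt (lam i) \<le> sqrt (lam i) * sqrt (lam i)"
    using lam_min_le[OF i] lam_pos[OF i] by (intro mult_right_mono) auto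
  also have "\<dots> = lam i" using lam_pos[OF i] by simp
  finally have "sqrt lam_min * (sqrt (lam i) * x\<^sup>2) \<le> lam i * x\<^sup>2"
    by (metis mult.assoc mult_right_mono zero_le_power2)
  thus ?thesis using lam_min_pos by (simp add: field_simps)
qed

lemma square_le_lam_square: "i \<in> I \<Longrightarrow> x\<^sup>2 \<le> (1 / lam_min) * (lam i * x\<^sup>2)"
proof -
  assume i: "i \<in> I"
  have "lam_min * x\<^sup>2 \<le> lam i * x\<^sup>2" using lam_min_le[OF i] by (intro mult_right_mono) auto
  thus ?thesis using lam_min_pos by (simp add: field_simps)
qed

lemma sqnorm1_summable:
  assumes u: "u \<in> Hr M I e lam 2"
  shows "(\<lambda>i. sqrt (lam i) * (coef M e u i)\<^sup>2) summable_on I"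
  using summable_on_cmult_right[OF has_sum_imp_summable[OF has_sum_sqnorm2[OF u]], of "1 / sqrt lam_min"]
proof (rule summable_on_comparison_test)
  fix i assume i: "i \<in> I"
  show "sqrt (lam i) * (coef M e u i)\<^sup>2 \<le> 1 / sqrt lam_min * (lam i * (coef M e u i)\<^sup>2)"
    by (rule sqrt_lam_square_le[OF i])
  show "0 \<le> sqrt (lam i) * (coef M e u i)\<^sup>2" using lam_pos[OF i] by simp
qed

lemma sqnorm1_le_sqnorm2:
  assumes u: "u \<in> Hr M I e lam 2"
  shows "sqnorm1 u \<le> sqnorm2 u / sqrt lam_min"
proof -
  have "sqnorm1 u \<le> infsum (\<lambda>i. (1 / sqrt lam_min) * (lam i * (coef M e u i)\<^sup>2)) I"
    unfolding sqnorm1_def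
    by (rule infsum_mono[OF sqnorm1_summable[OF u]
          summable_on_cmult_right[OF has_sum_imp_summable[OF has_sum_sqnorm2[OF u]]]])
      (rule sqrt_lam_square_le)
  also have "\<dots> = sqnorm2 u / sqrt lam_min" unfolding sqnorm2_def
    using infsum_cmult_right'[of "1 / sqrt lam_min" "\<lambda>i. lam i * (coef M e u i)\<^sup>2" I] by simp
  finally show ?thesis .
qed

lemma ip_self_le_sqnorm2:
  assumes u: "u \<in> Hr M I e lam 2"
  shows "ip M u u \<le> sqnorm2 u / lam_min"
proof -
  have hs: "((\<lambda>i. (coef M e u i)\<^sup>2) has_sum ip M u u) I"
    by (rule has_sum_coef_square[OF H2_imp_L2[OF u]])
  have "ip M u u \<le> infsum (\<lambda>i. (1 / lam_min) * (lam i * (coef M e u i)\<^sup>2)) I"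
    unfolding infsumI[OF hs, symmetric]
    by (rule infsum_mono[OF has_sum_imp_summable[OF hs]
          summable_on_cmult_right[OF has_sum_imp_summable[OF has_sum_sqnorm2[OF u]]]])
      (rule square_le_lam_square)
  also have "\<dots> = sqnorm2 u / lam_min" unfolding sqnorm2_def
    using infsum_cmult_right'[of "1 / lam_min" "\<lambda>i. lam i * (coef M e u i)\<^sup>2" I] by simp
  finally show ?thesis .
qed

lemma H2_diff:
  assumes u: "u \<in> Hr M I e lam 2" and w: "w \<in> Hr M I e lam 2"
  shows "u - w \<in> Hr M I e lam 2"
proof -
  have uL: "u \<in> L2 M" and wL: "w \<in> L2 M" using u w H2_imp_L2 by auto
  have "(\<lambda>i. 2 * (lam i * (coef M e u i)\<^sup>2) + 2 * (lam i * (coef M e w i)\<^sup>2)) summable_on I"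
    using H2_iff u w by (intro summable_on_add summable_on_cmult_right) auto
  hence "(\<lambda>i. lam i * (coef M e (u - w) i)\<^sup>2) summable_on I"
  proof (rule summable_on_comparison_test)
    fix i assume i: "i \<in> I"
    have "(coef M e u i - coef M e w i)\<^sup>2 \<le> 2 * (coef M e u i)\<^sup>2 + 2 * (coef M e w i)\<^sup>2"
      using zero_le_power2[of "coef M e u i + coef M e w i"] by (simp add: power2_eq_square algebra_simps)
    hence "lam i * (coef M e u i - coef M e w i)\<^sup>2 \<le> lam i * (2 * (coef M e u i)\<^sup>2 + 2 * (coef M e w i)\<^sup>2)"
      using lam_pos[OF i] by (intro mult_left_mono) auto
    thus "lam i * (coef M e (u - w) i)\<^sup>2 \<le> 2 * (lam i * (coef M e u i)\<^sup>2) + 2 * (lam i * (coef M e w i)\<^sup>2)"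
      unfolding coef_diff[OF uL wL i] by (simp add: algebra_simps)
    show "0 \<le> lam i * (coef M e (u - w) i)\<^sup>2" using lam_pos[OF i] by simp
  qed
  thus ?thesis using H2_iff L2_diff[OF uL wL] by simp
qed

lemma sqnorm2_increment:
  assumes u: "u \<in> Hr M I e lam 2" and u': "u' \<in> Hr M I e lam 2"
  shows "\<bar>sqnorm2 u' - sqnorm2 u\<bar> \<le> sqnorm2 (u' - u) + 2 * (sqrt (sqnorm2 u) * sqrt (sqnorm2 (u' - u)))"
proof -
  have "sqnorm2 u' = infsum (\<lambda>i. lam i * (coef M e u i + coef M e (u' - u) i)\<^sup>2) I"
    unfolding sqnorm2_def using coef_diff[OF H2_imp_L2[OF u'] H2_imp_L2[OF u]] by (intro infsum_cong) simp
  thus ?thesis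
    using weighted_square_sum_increment[of I lam "coef M e (u' - u)" "coef M e u"] lam_pos
      H2_iff H2_diff[OF u' u] u unfolding sqnorm2_def by (simp add: less_imp_le)
qed

lemma sqnorm1_increment:
  assumes u: "u \<in> Hr M I e lam 2" and u': "u' \<in> Hr M I e lam 2"
  shows "\<bar>sqnorm1 u' - sqnorm1 u\<bar> \<le> sqnorm1 (u' - u) + 2 * (sqrt (sqnorm1 u) * sqrt (sqnorm1 (u' - u)))"
proof -
  have "sqnorm1 u' = infsum (\<lambda>i. sqrt (lam i) * (coef M e u i + coef M e (u' - u) i)\<^sup>2) I"
    unfolding sqnorm1_def using coef_diff[OF H2_imp_L2[OF u'] H2_imp_L2[OF u]] by (intro infsum_cong) simp
  thus ?thesis
    using weighted_square_sum_increment[of I "\<lambda>i. sqrt (lam i)" "coef M e (u' - u)" "coef M e u"]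
      lam_pos sqnorm1_summable[OF H2_diff[OF u' u]] sqnorm1_summable[OF u]
    unfolding sqnorm1_def by (simp add: less_imp_le)
qed

lemma lyap_eq:
  "lyap M I e lam p k f z = sqnorm2 (fst z) + ip M (snd z) (snd z) + 1/2 * (sqnorm1 (fst z) - p)\<^sup>2
    + k\<^sup>2 * ip M (pospart (fst z)) (pospart (fst z)) - 2 * ip M (fst z) f"
  unfolding lyap_def energy_def nrm_r2_square nrm_r1_square nrm_square by simp

lemma phase_norm_eq: "phase_norm M I e lam z = sqrt (sqnorm2 (fst z) + ip M (snd z) (snd z))"
  unfolding phase_norm_def nrm_r2_square nrm_square by simp

lemma stationary_set_cong_AE:
  assumes st: "(u, v) \<in> stationary_set M I e lam p k f"
    and u': "u' \<in> Hr M I e lam 2" and v': "v' \<in> L2 M"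
    and uu: "AE x in M. u x = u' x" and vv: "AE x in M. v x = v' x"
  shows "(u', v') \<in> stationary_set M I e lam p k f"
proof -
  have uH: "u \<in> Hr M I e lam 2" and v0: "AE x in M. v x = 0"
    and eq: "\<forall>i\<in>I. lam i * coef M e u i - (p - (nrm_r M I e lam 1 u)\<^sup>2) * sqrt (lam i) * coef M e u i
                 + k\<^sup>2 * coef M e (pospart u) i = coef M e f i"
    using st unfolding stationary_set_def by auto
  have uL: "u \<in> L2 M" and u'L: "u' \<in> L2 M" using uH u' H2_imp_L2 by auto
  have cu: "coef M e u i = coef M e u' i" if "i \<in> I" for i
    by (rule coef_cong_AE[OF uu uL u'L that])
  have cp: "coef M e (pospart u) i = coef M e (pospart u') i" if "i \<in> I" for i
    using uu by (intro coef_cong_AE[OF _ L2_pospart[OF uL] L2_pospart[OF u'L] that])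
      (auto simp: pospart_def)
  have "nrm_r M I e lam 1 u = nrm_r M I e lam 1 u'"
    unfolding nrm_r_def by (auto intro!: arg_cong[where f = sqrt] infsum_cong simp: cu)
  moreover have "AE x in M. v' x = 0" using v0 vv by eventually_elim simp
  ultimately show ?thesis
    using u' v' eq cu cp unfolding stationary_set_def by auto
qed

end

section \<open>Energy identity along a weak solution\<close>

locale trajectory = spectral_basis M I e lam for M :: "'w measure" and I e lam +
  fixes p k :: real and f :: "'w \<Rightarrow> real" and U V :: "real \<Rightarrow> 'w \<Rightarrow> real"
  assumes f_L2: "f \<in> L2 M" and weak: "weak_solution M I e lam p k f U V"
begin

abbreviation "c i t \<equiv> coef M e (U t) i"
abbreviation "d i t \<equiv> coef M e (V t) i"
abbreviation "q i t \<equiv> coef M e (pospart (U t)) i"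
abbreviation "fc i \<equiv> coef M e f i"
abbreviation "lyap_at t \<equiv> lyap M I e lam p k f (U t, V t)"

definition accel :: "nat \<Rightarrow> real \<Rightarrow> real" where
  "accel i t = - lam i * c i t - d i t + (p - (nrm_r M I e lam 1 (U t))\<^sup>2) * sqrt (lam i) * c i t
               - k\<^sup>2 * q i t + fc i"

lemma U_H2: "0 \<le> t \<Longrightarrow> U t \<in> Hr M I e lam 2"
  using weak by (simp add: weak_solution_def)

lemma U_L2: "0 \<le> t \<Longrightarrow> U t \<in> L2 M"
  using U_H2 H2_imp_L2 by blast

lemma V_L2: "0 \<le> t \<Longrightarrow> V t \<in> L2 M"
  using weak by (simp add: weak_solution_def)

lemma pospart_U_L2: "0 \<le> t \<Longrightarrow> pospart (U t) \<in> L2 M"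
  using U_L2 L2_pospart by blast

lemma U_continuous: "0 \<le> t0 \<Longrightarrow> ((\<lambda>t. nrm_r M I e lam 2 (U t - U t0)) \<longlongrightarrow> 0) (at t0 within {0..})"
  using weak by (simp add: weak_solution_def)

lemma V_continuous: "0 \<le> t0 \<Longrightarrow> ((\<lambda>t. nrm M (V t - V t0)) \<longlongrightarrow> 0) (at t0 within {0..})"
  using weak by (simp add: weak_solution_def)

lemma coef_U_deriv: "i \<in> I \<Longrightarrow> 0 \<le> t \<Longrightarrow> ((\<lambda>s. c i s) has_real_derivative d i t) (at t within {0..})"
  using weak by (simp add: weak_solution_def)

lemma coef_V_deriv: "i \<in> I \<Longrightarrow> 0 \<le> t \<Longrightarrow> ((\<lambda>s. d i s) has_real_derivative accel i t) (at t within {0..})"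
  using weak by (simp add: weak_solution_def accel_def)

lemma bounded_partial_sums_sqrt_lam_coef_U:
  "bounded_partial_sums I {0..T} (\<lambda>i \<tau>. (sqrt (lam i) * c i \<tau>)\<^sup>2)"
proof (rule bounded_partial_sums_if_continuous[OF compact_Icc,
      where D = "\<lambda>\<tau>0 \<tau>. nrm_r M I e lam 2 (U \<tau> - U \<tau>0)"])
  show "(\<lambda>i. (sqrt (lam i) * c i \<tau>)\<^sup>2) summable_on I" if "\<tau> \<in> {0..T}" for \<tau>
    using H2_summable_sqrt_lam U_H2 that by simp
  show "((\<lambda>\<tau>. nrm_r M I e lam 2 (U \<tau> - U \<tau>0)) \<longlongrightarrow> 0) (at \<tau>0 within {0..T})" if "\<tau>0 \<in> {0..T}" for \<tau>0
    using U_continuous[of \<tau>0] that by (auto intro: tendsto_within_subset)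
  fix \<tau>0 \<tau> F assume t: "\<tau>0 \<in> {0..T}" "\<tau> \<in> {0..T}" and F: "finite F" "F \<subseteq> I"
  have "(\<Sum>i\<in>F. (sqrt (lam i) * c i \<tau> - sqrt (lam i) * c i \<tau>0)\<^sup>2)
      = (\<Sum>i\<in>F. lam i * (coef M e (U \<tau> - U \<tau>0) i)\<^sup>2)"
    using F t coef_diff[OF U_L2 U_L2] square_sqrt_lam_mult
    by (intro sum.cong) (auto simp: right_diff_distrib[symmetric])
  also have "\<dots> \<le> (nrm_r M I e lam 2 (U \<tau> - U \<tau>0))\<^sup>2"
    using t by (intro sum_lam_coef_square_le[OF H2_diff[OF U_H2 U_H2] F]) auto
  finally show "(\<Sum>i\<in>F. (sqrt (lam i) * c i \<tau> - sqrt (lam i) * c i \<tau>0)\<^sup>2)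
      \<le> (nrm_r M I e lam 2 (U \<tau> - U \<tau>0))\<^sup>2" .
qed

lemma small_tails_coef_V: "uniformly_small_tails I {0..T} (\<lambda>i \<tau>. (d i \<tau>)\<^sup>2)"
proof (rule small_tails_if_continuous[OF compact_Icc, where D = "\<lambda>\<tau>0 \<tau>. nrm M (V \<tau> - V \<tau>0)"])
  show "(\<lambda>i. (d i \<tau>)\<^sup>2) summable_on I" if "\<tau> \<in> {0..T}" for \<tau>
    using has_sum_coef_square V_L2 that has_sum_imp_summable by fastforce
  show "((\<lambda>\<tau>. nrm M (V \<tau> - V \<tau>0)) \<longlongrightarrow> 0) (at \<tau>0 within {0..T})" if "\<tau>0 \<in> {0..T}" for \<tau>0
    using V_continuous[of \<tau>0] that by (auto intro: tendsto_within_subset)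
  fix \<tau>0 \<tau> F assume t: "\<tau>0 \<in> {0..T}" "\<tau> \<in> {0..T}" and F: "finite F" "F \<subseteq> I"
  have "(\<Sum>i\<in>F. (d i \<tau> - d i \<tau>0)\<^sup>2) = (\<Sum>i\<in>F. (coef M e (V \<tau> - V \<tau>0) i)\<^sup>2)"
    using F t coef_diff[OF V_L2 V_L2] by (intro sum.cong) auto
  also have "\<dots> \<le> (nrm M (V \<tau> - V \<tau>0))\<^sup>2"
    using t by (intro sum_coef_square_le[OF L2_diff[OF V_L2 V_L2] F]) auto
  finally show "(\<Sum>i\<in>F. (d i \<tau> - d i \<tau>0)\<^sup>2) \<le> (nrm M (V \<tau> - V \<tau>0))\<^sup>2" .
qed

lemma bounded_partial_sums_coef_U: "bounded_partial_sums I {0..T} (\<lambda>i \<tau>. (c i \<tau>)\<^sup>2)"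
  by (rule bounded_partial_sums_le[OF bounded_partial_sums_sqrt_lam_coef_U, of "1 / lam_min"])
    (use lam_min_pos square_le_lam_square square_sqrt_lam_mult in auto)

lemma sqnorm2_U_bounded: "\<exists>B. \<forall>\<tau>\<in>{0..T}. sqnorm2 (U \<tau>) \<le> B"
proof -
  obtain B where B: "\<And>\<tau> F. \<tau> \<in> {0..T} \<Longrightarrow> finite F \<and> F \<subseteq> I \<Longrightarrow> (\<Sum>i\<in>F. (sqrt (lam i) * c i \<tau>)\<^sup>2) \<le> B"
    using bounded_partial_sums_sqrt_lam_coef_U[of T] unfolding bounded_partial_sums_def by blast
  have "sqnorm2 (U \<tau>) \<le> B" if t: "\<tau> \<in> {0..T}" for \<tau>
  proof (rule has_sum_le_finite_sums[OF has_sum_sqnorm2[OF U_H2]])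
    show "0 \<le> \<tau>" using t by simp
    fix F assume F: "finite F" "F \<subseteq> I"
    have "(\<Sum>i\<in>F. lam i * (c i \<tau>)\<^sup>2) = (\<Sum>i\<in>F. (sqrt (lam i) * c i \<tau>)\<^sup>2)"
      using F(2) by (intro sum.cong refl) (simp add: square_sqrt_lam_mult subset_iff)
    also have "\<dots> \<le> B" using B[OF t] F by blast
    finally show "(\<Sum>i\<in>F. lam i * (c i \<tau>)\<^sup>2) \<le> B" .
  qed
  thus ?thesis by blast
qed

lemma sqnorm1_U_bounded: "\<exists>C. \<forall>\<tau>\<in>{0..T}. \<bar>sqnorm1 (U \<tau>)\<bar> \<le> C"
proof -
  obtain B where B: "\<And>\<tau>. \<tau> \<in> {0..T} \<Longrightarrow> sqnorm2 (U \<tau>) \<le> B" using sqnorm2_U_bounded[of T] by blast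
  have "\<bar>sqnorm1 (U \<tau>)\<bar> \<le> B / sqrt lam_min" if t: "\<tau> \<in> {0..T}" for \<tau>
  proof -
    have "sqnorm1 (U \<tau>) \<le> sqnorm2 (U \<tau>) / sqrt lam_min" using sqnorm1_le_sqnorm2 U_H2 t by simp
    also have "\<dots> \<le> B / sqrt lam_min" using B[OF t] lam_min_pos by (simp add: divide_right_mono)
    finally show ?thesis using sqnorm1_nonneg by simp
  qed
  thus ?thesis by blast
qed

lemma bounded_partial_sums_coef_pospart_U: "bounded_partial_sums I {0..T} (\<lambda>i \<tau>. (q i \<tau>)\<^sup>2)"
proof -
  obtain B where B: "\<And>\<tau>. \<tau> \<in> {0..T} \<Longrightarrow> sqnorm2 (U \<tau>) \<le> B" using sqnorm2_U_bounded[of T] by blast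
  have "(\<Sum>i\<in>F. (q i \<tau>)\<^sup>2) \<le> B / lam_min" if t: "\<tau> \<in> {0..T}" and F: "finite F \<and> F \<subseteq> I" for \<tau> F
  proof -
    have t0: "0 \<le> \<tau>" using t by simp
    have "(\<Sum>i\<in>F. (q i \<tau>)\<^sup>2) \<le> (nrm M (pospart (U \<tau>)))\<^sup>2"
      using F by (intro sum_coef_square_le[OF pospart_U_L2[OF t0]]) auto
    also have "\<dots> \<le> ip M (U \<tau>) (U \<tau>)" unfolding nrm_square by (rule ip_pospart_le[OF U_L2[OF t0]])
    also have "\<dots> \<le> sqnorm2 (U \<tau>) / lam_min" by (rule ip_self_le_sqnorm2[OF U_H2[OF t0]])
    also have "\<dots> \<le> B / lam_min" using B[OF t] lam_min_pos by (simp add: divide_right_mono)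
    finally show ?thesis .
  qed
  thus ?thesis unfolding bounded_partial_sums_def by blast
qed

text \<open>The pairing \<open>\<langle>A\<^sup>1\<^sup>/\<^sup>2 u, v\<rangle>\<close>, i.e. half the time derivative of \<open>\<parallel>u\<parallel>\<^sub>1\<^sup>2\<close>.\<close>

definition sqrtA_pairing :: "real \<Rightarrow> real" where
  "sqrtA_pairing t = infsum (\<lambda>i. sqrt (lam i) * c i t * d i t) I"

lemma has_sum_sqrtA_pairing:
  assumes t: "0 \<le> t"
  shows "((\<lambda>i. sqrt (lam i) * c i t * d i t) has_sum sqrtA_pairing t) I"
proof -
  have "(\<lambda>i. (sqrt (lam i) * c i t) * d i t) summable_on I"
    by (rule mult_summable_if_squares_summable[OF H2_summable_sqrt_lam[OF U_H2[OF t]]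
          has_sum_imp_summable[OF has_sum_coef_square[OF V_L2[OF t]]]])
  thus ?thesis unfolding sqrtA_pairing_def by simp
qed

lemma small_tails_sqrtA_pairing: "uniformly_small_tails I {0..T} (\<lambda>i \<tau>. sqrt (lam i) * c i \<tau> * d i \<tau>)"
  by (rule small_tails_cong[OF small_tails_mult[OF small_tails_coef_V bounded_partial_sums_sqrt_lam_coef_U]])
    simp

lemma small_tails_V_pospart: "uniformly_small_tails I {0..T} (\<lambda>i \<tau>. d i \<tau> * q i \<tau>)"
  by (rule small_tails_mult[OF small_tails_coef_V bounded_partial_sums_coef_pospart_U])

lemma small_tails_V_forcing: "uniformly_small_tails I {0..T} (\<lambda>i \<tau>. d i \<tau> * fc i)"
  by (rule small_tails_mult[OF small_tails_coef_V bounded_partial_sums_const])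
    (use has_sum_imp_summable[OF has_sum_coef_square[OF f_L2]] in simp)

text \<open>Testing the equation with \<open>v\<close>: the termwise time derivative of \<open>\<parallel>u\<parallel>\<^sub>2\<^sup>2 + \<parallel>v\<parallel>\<^sup>2\<close>.\<close>

definition energy_flux :: "nat \<Rightarrow> real \<Rightarrow> real" where
  "energy_flux i s = (-2) * (d i s)\<^sup>2 + 2 * (p - sqnorm1 (U s)) * (sqrt (lam i) * c i s * d i s)
     + (-2 * k\<^sup>2) * (d i s * q i s) + 2 * (d i s * fc i)"

lemma coef_energy_has_derivative:
  assumes i: "i \<in> I" and t: "0 \<le> t"
  shows "((\<lambda>s. lam i * (c i s)\<^sup>2 + (d i s)\<^sup>2) has_real_derivative energy_flux i t) (at t within {0..})"
proof -
  have "((\<lambda>s. lam i * (c i s)\<^sup>2 + (d i s)\<^sup>2) has_real_derivative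
      (lam i * (2 * c i t * d i t) + 2 * d i t * accel i t)) (at t within {0..})"
    using coef_U_deriv[OF i t] coef_V_deriv[OF i t] by (auto intro!: derivative_eq_intros)
  moreover have "lam i * (2 * c i t * d i t) + 2 * d i t * accel i t = energy_flux i t"
    unfolding accel_def energy_flux_def nrm_r1_square by (simp add: power2_eq_square algebra_simps)
  ultimately show ?thesis by simp
qed

lemma has_sum_energy_flux:
  assumes t: "0 \<le> t"
  shows "((\<lambda>i. energy_flux i t) has_sum
     (-2) * ip M (V t) (V t) + 2 * (p - sqnorm1 (U t)) * sqrtA_pairing t
       + (-2 * k\<^sup>2) * ip M (V t) (pospart (U t)) + 2 * ip M (V t) f) I"
  unfolding energy_flux_def
  by (intro has_sum_add has_sum_cmult_right has_sum_coef_square has_sum_sqrtA_pairing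
      has_sum_coef_mult V_L2 pospart_U_L2 f_L2 t)

lemma small_tails_energy_flux: "uniformly_small_tails I {0..T} energy_flux"
proof -
  obtain C where C: "\<And>\<tau>. \<tau> \<in> {0..T} \<Longrightarrow> \<bar>sqnorm1 (U \<tau>)\<bar> \<le> C" using sqnorm1_U_bounded[of T] by blast
  have u1: "uniformly_small_tails I {0..T} (\<lambda>i \<tau>. (-2) * (d i \<tau>)\<^sup>2)"
    by (rule small_tails_scale[OF small_tails_coef_V, where g = "\<lambda>_. -2" and C = 2]) simp
  have u2: "uniformly_small_tails I {0..T}
      (\<lambda>i \<tau>. (2 * (p - sqnorm1 (U \<tau>))) * (sqrt (lam i) * c i \<tau> * d i \<tau>))"
    by (rule small_tails_scale[OF small_tails_sqrtA_pairing, where C = "2 * (\<bar>p\<bar> + C)"])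
      (use C in \<open>fastforce simp: abs_mult\<close>)
  have u3: "uniformly_small_tails I {0..T} (\<lambda>i \<tau>. (-2 * k\<^sup>2) * (d i \<tau> * q i \<tau>))"
    by (rule small_tails_scale[OF small_tails_V_pospart, where g = "\<lambda>_. -2 * k\<^sup>2" and C = "2 * k\<^sup>2"])
      (simp add: abs_mult)
  have u4: "uniformly_small_tails I {0..T} (\<lambda>i \<tau>. 2 * (d i \<tau> * fc i))"
    by (rule small_tails_scale[OF small_tails_V_forcing, where g = "\<lambda>_. 2" and C = 2]) simp
  show ?thesis
    using small_tails_add[OF small_tails_add[OF small_tails_add[OF u1 u2] u3] u4]
    unfolding energy_flux_def by simp
qed

lemma deriv_sqnorm2_U_plus_V:
  assumes t: "0 \<le> t"
  shows "((\<lambda>s. sqnorm2 (U s) + ip M (V s) (V s)) has_real_derivative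
     (-2) * ip M (V t) (V t) + 2 * (p - sqnorm1 (U t)) * sqrtA_pairing t
       + (-2 * k\<^sup>2) * ip M (V t) (pospart (U t)) + 2 * ip M (V t) f) (at t within {0..})"
  using has_sum_add[OF has_sum_sqnorm2[OF U_H2] has_sum_coef_square[OF V_L2]]
  by (intro has_real_derivative_has_sum_termwise[OF coef_energy_has_derivative _ has_sum_energy_flux
        small_tails_energy_flux t])

lemma deriv_sqnorm1_U:
  assumes t: "0 \<le> t"
  shows "((\<lambda>s. sqnorm1 (U s)) has_real_derivative 2 * sqrtA_pairing t) (at t within {0..})"
proof (rule has_real_derivative_has_sum_termwise[where a = "\<lambda>i s. sqrt (lam i) * (c i s)\<^sup>2"
      and a' = "\<lambda>i s. 2 * (sqrt (lam i) * c i s * d i s)" and I = I, OF _ _ _ _ t])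
  fix i \<tau> assume i: "i \<in> I" and t0: "0 \<le> (\<tau>::real)"
  show "((\<lambda>s. sqrt (lam i) * (c i s)\<^sup>2) has_real_derivative 2 * (sqrt (lam i) * c i \<tau> * d i \<tau>))
      (at \<tau> within {0..})"
    using coef_U_deriv[OF i t0] by (auto intro!: derivative_eq_intros)
next
  fix \<tau> :: real assume t0: "0 \<le> \<tau>"
  show "((\<lambda>i. sqrt (lam i) * (c i \<tau>)\<^sup>2) has_sum sqnorm1 (U \<tau>)) I"
    unfolding sqnorm1_def using sqnorm1_summable[OF U_H2[OF t0]] by simp
  show "((\<lambda>i. 2 * (sqrt (lam i) * c i \<tau> * d i \<tau>)) has_sum 2 * sqrtA_pairing \<tau>) I"
    by (rule has_sum_cmult_right[OF has_sum_sqrtA_pairing[OF t0]])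
next
  show "uniformly_small_tails I {0..T} (\<lambda>i s. 2 * (sqrt (lam i) * c i s * d i s))" for T
    by (rule small_tails_scale[OF small_tails_sqrtA_pairing, where g = "\<lambda>_. 2" and C = 2]) simp
qed

lemma deriv_ip_forcing:
  assumes t: "0 \<le> t"
  shows "((\<lambda>s. ip M (U s) f) has_real_derivative ip M (V t) f) (at t within {0..})"
proof (rule has_real_derivative_has_sum_termwise[where a = "\<lambda>i s. c i s * fc i"
      and a' = "\<lambda>i s. d i s * fc i" and I = I, OF _ _ _ small_tails_V_forcing t])
  show "((\<lambda>s. c i s * fc i) has_real_derivative d i \<tau> * fc i) (at \<tau> within {0..})"
    if "i \<in> I" "0 \<le> \<tau>" for i \<tau>
    using coef_U_deriv[OF that] by (auto intro!: derivative_eq_intros)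
  show "((\<lambda>i. c i \<tau> * fc i) has_sum ip M (U \<tau>) f) I"
    and "((\<lambda>i. d i \<tau> * fc i) has_sum ip M (V \<tau>) f) I" if "0 \<le> \<tau>" for \<tau>
    using has_sum_coef_mult U_L2 V_L2 f_L2 that by blast+
qed

lemma deriv_ip_frozen_pospart:
  assumes t: "0 \<le> t" and s: "0 \<le> s"
  shows "((\<lambda>r. ip M (U r) (pospart (U t))) has_real_derivative ip M (V s) (pospart (U t)))
    (at s within {0..})"
proof (rule has_real_derivative_has_sum_termwise[where a = "\<lambda>i r. c i r * q i t"
      and a' = "\<lambda>i r. d i r * q i t" and I = I, OF _ _ _ _ s])
  show "((\<lambda>r. c i r * q i t) has_real_derivative d i \<tau> * q i t) (at \<tau> within {0..})"
    if "i \<in> I" "0 \<le> \<tau>" for i \<tau>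
    using coef_U_deriv[OF that] by (auto intro!: derivative_eq_intros)
  show "((\<lambda>i. c i \<tau> * q i t) has_sum ip M (U \<tau>) (pospart (U t))) I"
    and "((\<lambda>i. d i \<tau> * q i t) has_sum ip M (V \<tau>) (pospart (U t))) I" if "0 \<le> \<tau>" for \<tau>
    using has_sum_coef_mult U_L2 V_L2 pospart_U_L2[OF t] that by blast+
  show "uniformly_small_tails I {0..T} (\<lambda>i r. d i r * q i t)" for T
    by (rule small_tails_mult[OF small_tails_coef_V bounded_partial_sums_const])
      (use has_sum_imp_summable[OF has_sum_coef_square[OF pospart_U_L2[OF t]]] in simp)
qed

lemma deriv_sqdist_frozen:
  assumes t: "0 \<le> t"
  shows "((\<lambda>r. ip M (U r - U t) (U r - U t)) has_real_derivative 0) (at t within {0..})"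
proof -
  define H' where "H' r = infsum (\<lambda>i. 2 * ((c i r - c i t) * d i r)) I" for r
  have sq: "((\<lambda>i. (c i r - c i t)\<^sup>2) has_sum ip M (U r - U t) (U r - U t)) I" if r: "0 \<le> r" for r
    using has_sum_coef_square[OF L2_diff[OF U_L2[OF r] U_L2[OF t]]] coef_diff[OF U_L2[OF r] U_L2[OF t]]
    by (simp cong: has_sum_cong)
  have "((\<lambda>r. ip M (U r - U t) (U r - U t)) has_real_derivative H' t) (at t within {0..})"
  proof (rule has_real_derivative_has_sum_termwise[where a = "\<lambda>i r. (c i r - c i t)\<^sup>2"
        and a' = "\<lambda>i r. 2 * ((c i r - c i t) * d i r)" and I = I, OF _ sq _ _ t])
    show "((\<lambda>r. (c i r - c i t)\<^sup>2) has_real_derivative 2 * ((c i \<tau> - c i t) * d i \<tau>)) (at \<tau> within {0..})"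
      if "i \<in> I" "0 \<le> \<tau>" for i \<tau>
      using coef_U_deriv[OF that] by (auto intro!: derivative_eq_intros)
    show "((\<lambda>i. 2 * ((c i \<tau> - c i t) * d i \<tau>)) has_sum H' \<tau>) I" if t0: "0 \<le> \<tau>" for \<tau>
      using mult_summable_if_squares_summable[OF has_sum_imp_summable[OF sq[OF t0]]
          has_sum_imp_summable[OF has_sum_coef_square[OF V_L2[OF t0]]]]
      unfolding H'_def by (simp add: summable_on_cmult_right)
  next
    fix T :: real
    have "bounded_partial_sums I {0..T} (\<lambda>i \<tau>. (c i \<tau>)\<^sup>2 + (c i t)\<^sup>2)"
      by (rule bounded_partial_sums_add[OF bounded_partial_sums_coef_U bounded_partial_sums_const])
        (use has_sum_imp_summable[OF has_sum_coef_square[OF U_L2[OF t]]] in simp)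
    hence "bounded_partial_sums I {0..T} (\<lambda>i \<tau>. (c i \<tau> - c i t)\<^sup>2)"
      by (rule bounded_partial_sums_le[of _ _ _ 2])
        (use zero_le_power2[of "c _ _ + c _ t"] in \<open>auto simp: power2_eq_square algebra_simps\<close>)
    hence "uniformly_small_tails I {0..T} (\<lambda>i \<tau>. 2 * (d i \<tau> * (c i \<tau> - c i t)))"
      by (intro small_tails_scale[OF small_tails_mult[OF small_tails_coef_V], where g = "\<lambda>_. 2" and C = 2]) simp_all
    thus "uniformly_small_tails I {0..T} (\<lambda>i r. 2 * ((c i r - c i t) * d i r))"
      by (rule small_tails_cong) (simp add: algebra_simps)
  qed
  moreover have "H' t = 0" unfolding H'_def by simp
  ultimately show ?thesis by simp
qed

text \<open>\<open>s \<mapsto> \<parallel>u(s)\<^sup>+\<parallel>\<^sup>2\<close> is differentiable although \<open>u \<mapsto> u\<^sup>+\<close> is not: its difference from the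
  linearisation at \<open>t\<close> is squeezed between \<open>0\<close> and \<open>\<parallel>u(s) - u(t)\<parallel>\<^sup>2\<close>, which has derivative \<open>0\<close> at \<open>t\<close>.\<close>

lemma deriv_pospart_sqnorm:
  assumes t: "0 \<le> t"
  shows "((\<lambda>s. ip M (pospart (U s)) (pospart (U s))) has_real_derivative 2 * ip M (V t) (pospart (U t)))
    (at t within {0..})"
proof -
  define P where "P s = ip M (pospart (U s)) (pospart (U s))" for s
  define G where "G s = ip M (U s) (pospart (U t))" for s
  define R where "R s = P s - P t - 2 * (G s - G t)" for s
  have R0: "(R has_real_derivative 0) (at t within {0..})"
  proof (rule has_real_derivative_zero_squeeze[OF deriv_sqdist_frozen[OF t]])
    show "ip M (U t - U t) (U t - U t) = 0" by (simp add: ip_def)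
    show "R t = 0" unfolding R_def by simp
    show "\<bar>R s\<bar> \<le> ip M (U s - U t) (U s - U t)" if "s \<in> {0..}" for s
      using pospart_remainder_bounds[OF U_L2 U_L2[OF t], of s] that unfolding R_def P_def G_def by simp
  qed
  have "((\<lambda>s. R s + P t + 2 * (G s - G t)) has_real_derivative
      0 + 0 + 2 * (ip M (V t) (pospart (U t)) - 0)) (at t within {0..})"
    unfolding G_def
    by (intro DERIV_add R0 DERIV_const DERIV_cmult DERIV_diff deriv_ip_frozen_pospart t)
  moreover have "(\<lambda>s. R s + P t + 2 * (G s - G t)) = P" unfolding R_def by auto
  ultimately show ?thesis unfolding P_def by simp
qed

lemma lyap_has_derivative:
  assumes t: "0 \<le> t"
  shows "((\<lambda>s. lyap_at s) has_real_derivative -2 * ip M (V t) (V t)) (at t within {0..})"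
proof -
  have sq: "((\<lambda>s. 1/2 * (sqnorm1 (U s) - p)\<^sup>2) has_real_derivative
      2 * (sqnorm1 (U t) - p) * sqrtA_pairing t) (at t within {0..})"
    using deriv_sqnorm1_U[OF t] by (auto intro!: derivative_eq_intros)
  have "((\<lambda>s. sqnorm2 (U s) + ip M (V s) (V s) + 1/2 * (sqnorm1 (U s) - p)\<^sup>2
           + k\<^sup>2 * ip M (pospart (U s)) (pospart (U s)) - 2 * ip M (U s) f)
      has_real_derivative
        ((-2) * ip M (V t) (V t) + 2 * (p - sqnorm1 (U t)) * sqrtA_pairing t
           + (-2 * k\<^sup>2) * ip M (V t) (pospart (U t)) + 2 * ip M (V t) f)
        + 2 * (sqnorm1 (U t) - p) * sqrtA_pairing t
        + k\<^sup>2 * (2 * ip M (V t) (pospart (U t))) - 2 * ip M (V t) f) (at t within {0..})"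
    by (intro DERIV_diff DERIV_add DERIV_cmult deriv_sqnorm2_U_plus_V sq deriv_pospart_sqnorm
        deriv_ip_forcing t)
  thus ?thesis unfolding lyap_eq by (simp add: algebra_simps)
qed

lemma lyap_antimono:
  assumes "0 \<le> s" "s \<le> t"
  shows "lyap_at t \<le> lyap_at s"
proof (rule DERIV_nonpos_imp_decreasing_open[OF assms(2)])
  fix x assume x: "s < x" "x < t"
  have "at x within {0..} = at x" using x assms by (intro at_within_interior) simp
  hence "DERIV (\<lambda>s. lyap_at s) x :> -2 * ip M (V x) (V x)"
    using lyap_has_derivative[of x] x assms by simp
  thus "\<exists>y. DERIV (\<lambda>s. lyap_at s) x :> y \<and> y \<le> 0"
    using ip_self_nonneg[of M "V x"] by (intro exI[of _ "-2 * ip M (V x) (V x)"]) simp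
next
  show "continuous_on {s..t} (\<lambda>s. lyap_at s)"
    unfolding continuous_on_eq_continuous_within
  proof
    fix x assume x: "x \<in> {s..t}"
    have "continuous (at x within {0..}) (\<lambda>s. lyap_at s)"
      using DERIV_continuous[OF lyap_has_derivative[of x]] x assms by simp
    thus "continuous (at x within {s..t}) (\<lambda>s. lyap_at s)"
      by (rule continuous_within_subset) (use assms in auto)
  qed
qed

lemma velocity_vanishes_if_lyap_constant:
  assumes const: "\<forall>t>0. lyap_at t = C" and t: "t > 0"
  shows "ip M (V t) (V t) = 0"
proof -
  have "at t within {0..} = at t" using t by (intro at_within_interior) simp
  hence "DERIV (\<lambda>s. lyap_at s) t :> -2 * ip M (V t) (V t)"
    using lyap_has_derivative[of t] t by simp
  moreover have "DERIV (\<lambda>s. lyap_at s) t :> 0"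
    by (rule has_field_derivative_transform_within_open[OF DERIV_const[of C], of "{0<..}"])
      (use t const in auto)
  ultimately show ?thesis using DERIV_unique by fastforce
qed

lemma initial_velocity_vanishes:
  assumes V0: "\<And>t. t > 0 \<Longrightarrow> ip M (V t) (V t) = 0"
  shows "nrm M (V 0) = 0"
proof -
  have "nrm M (V \<tau> - V 0) = nrm M (V 0)" if t: "\<tau> > 0" for \<tau>
  proof -
    have L1: "V \<tau> \<in> L2 M" and L0: "V 0 \<in> L2 M" using V_L2 t by auto
    have "\<bar>ip M (V \<tau>) (V 0)\<bar> \<le> nrm M (V \<tau>) * nrm M (V 0)" by (rule abs_ip_le_nrm_mult[OF L1 L0])
    hence "ip M (V \<tau>) (V 0) = 0" using V0[OF t] by (simp add: nrm_def)
    moreover have "ip M (V \<tau> - V 0) (V \<tau> - V 0)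
        = ip M (V \<tau>) (V \<tau>) - 2 * ip M (V \<tau>) (V 0) + ip M (V 0) (V 0)"
      using ip_diff_left[OF L1 L0 L2_diff[OF L1 L0]] ip_diff_left[OF L1 L0 L1] ip_diff_left[OF L1 L0 L0]
        ip_commute[of M "V \<tau>" "V \<tau> - V 0"] ip_commute[of M "V 0" "V \<tau> - V 0"] ip_commute[of M "V 0" "V \<tau>"]
      by simp
    ultimately show ?thesis using V0[OF t] by (simp add: nrm_def)
  qed
  hence "((\<lambda>\<tau>. nrm M (V \<tau> - V 0)) \<longlongrightarrow> nrm M (V 0)) (at 0 within {0..})"
    by (intro tendsto_eventually) (auto simp: eventually_at_filter)
  moreover have "at (0::real) within {0..} \<noteq> bot" by (simp add: at_within_Ici_at_right)
  ultimately show ?thesis using tendsto_unique V_continuous[of 0] by fastforce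
qed

text \<open>If the Lyapunov functional is constant, then \<open>v \<equiv> 0\<close>; differentiating the coefficients of
  \<open>v\<close> at time \<open>0\<close> then yields the stationary equation for \<open>u(0)\<close>.\<close>

lemma initial_state_stationary:
  assumes const: "\<forall>t>0. lyap_at t = C"
  shows "(U 0, V 0) \<in> stationary_set M I e lam p k f"
proof -
  have V_zero: "ip M (V t) (V t) = 0" if "0 \<le> t" for t
  proof (cases "t = 0")
    case True
    thus ?thesis using initial_velocity_vanishes[OF velocity_vanishes_if_lyap_constant[OF const]]
      by (simp add: nrm_def)
  qed (use that velocity_vanishes_if_lyap_constant[OF const] in simp)
  have d_zero: "d i t = 0" if "0 \<le> t" "i \<in> I" for i t
    using coef_square_le[OF V_L2 that(2), of t] V_zero that by simp
  have accel_zero: "accel i 0 = 0" if i: "i \<in> I" for i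
  proof -
    have "((\<lambda>s. d i s) has_real_derivative 0) (at 0 within {0..})"
      by (rule has_field_derivative_transform_within[OF DERIV_const[of 0], of 1]) (use d_zero i in auto)
    moreover have "at (0::real) within {0..} \<noteq> bot" by (simp add: at_within_Ici_at_right)
    ultimately show ?thesis
      using coef_V_deriv[OF i, of 0] vector_derivative_unique_within
      by (fastforce simp: has_real_derivative_iff_has_vector_derivative)
  qed
  have "AE x in M. V 0 x = 0"
    using AE_zero_if_nrm_eq_0[OF V_L2] V_zero[of 0] by (simp add: nrm_def)
  moreover have "lam i * c i 0 - (p - (nrm_r M I e lam 1 (U 0))\<^sup>2) * sqrt (lam i) * c i 0
      + k\<^sup>2 * q i 0 = fc i" if "i \<in> I" for i
    using accel_zero[OF that] d_zero[OF _ that, of 0] unfolding accel_def by simp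
  ultimately show ?thesis unfolding stationary_set_def using U_H2 V_L2 by auto
qed

end

section \<open>Continuity and coercivity of the Lyapunov functional\<close>

lemma half_square_shift_le:
  fixes y y' p a r :: real
  assumes "\<bar>y' - y\<bar> \<le> r * a" "0 \<le> r" "r \<le> 1" "0 \<le> a"
  shows "\<bar>1/2 * (y' - p)\<^sup>2 - 1/2 * (y - p)\<^sup>2\<bar> \<le> r * (1/2 * (a * (a + 2 * \<bar>y - p\<bar>)))"
proof -
  have "\<bar>1/2 * (y' - p)\<^sup>2 - 1/2 * (y - p)\<^sup>2\<bar> = \<bar>1/2 * ((y' - y) * ((y' - y) + 2 * (y - p)))\<bar>"
    by (rule arg_cong[where f = abs]) (simp add: power2_eq_square algebra_simps)
  also have "\<dots> = 1/2 * (\<bar>y' - y\<bar> * \<bar>(y' - y) + 2 * (y - p)\<bar>)"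
    by (simp only: abs_mult)
  also have "\<dots> \<le> 1/2 * ((r * a) * (a + 2 * \<bar>y - p\<bar>))"
  proof -
    have "r * a \<le> 1 * a" using assms by (intro mult_right_mono) auto
    hence "\<bar>y' - y\<bar> \<le> a" using assms(1) by simp
    hence "\<bar>(y' - y) + 2 * (y - p)\<bar> \<le> a + 2 * \<bar>y - p\<bar>"
      using abs_triangle_ineq[of "y' - y" "2 * (y - p)"] unfolding abs_mult by simp
    thus ?thesis using assms by (intro mult_left_mono mult_mono) auto
  qed
  finally show ?thesis by (simp add: algebra_simps)
qed

lemma ip_self_increment_le:
  assumes v: "v \<in> L2 M" and v': "v' \<in> L2 M"
    and r: "sqrt (ip M (v' - v) (v' - v)) \<le> r" "r \<le> 1"
  shows "\<bar>ip M v' v' - ip M v v\<bar> \<le> r * (1 + 2 * sqrt (ip M v v))"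
proof -
  have "\<bar>ip M v' v' - ip M v v\<bar>
      \<le> (sqrt (ip M (v' - v) (v' - v)))\<^sup>2 + 2 * (sqrt (ip M v v) * sqrt (ip M (v' - v) (v' - v)))"
    using ip_self_increment[OF v v'] ip_self_nonneg[of M "v' - v"] by simp
  also have "\<dots> \<le> r * (1\<^sup>2 + 2 * sqrt (ip M v v) * 1)"
  proof (rule quadratic_increment_le)
    show "0 \<le> sqrt (ip M (v' - v) (v' - v))" "0 \<le> sqrt (ip M v v)" by (simp_all add: ip_self_nonneg)
    thus "0 \<le> r" using r(1) by linarith
  qed (use r in simp_all)
  finally show ?thesis by simp
qed

context spectral_basis
begin

lemma sqrt_ip_self_le_sqnorm2:
  "u \<in> Hr M I e lam 2 \<Longrightarrow> sqrt (ip M u u) \<le> sqrt (sqnorm2 u) * (1 / sqrt lam_min)"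
  using ip_self_le_sqnorm2 real_sqrt_le_mono by (fastforce simp: real_sqrt_divide)

lemma sqrt_sqnorm1_le_sqnorm2:
  "u \<in> Hr M I e lam 2 \<Longrightarrow> sqrt (sqnorm1 u) \<le> sqrt (sqnorm2 u) * (1 / sqrt (sqrt lam_min))"
  using sqnorm1_le_sqnorm2 real_sqrt_le_mono by (fastforce simp: real_sqrt_divide)

lemma sqnorm2_increment_le:
  assumes u: "u \<in> Hr M I e lam 2" and u': "u' \<in> Hr M I e lam 2"
    and r: "sqrt (sqnorm2 (u' - u)) \<le> r" "r \<le> 1"
  shows "\<bar>sqnorm2 u' - sqnorm2 u\<bar> \<le> r * (1 + 2 * sqrt (sqnorm2 u))"
proof -
  have r0: "0 \<le> r" using r(1) real_sqrt_ge_zero[OF sqnorm2_nonneg[of "u' - u"]] by linarith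
  have "\<bar>sqnorm2 u' - sqnorm2 u\<bar>
      \<le> (sqrt (sqnorm2 (u' - u)))\<^sup>2 + 2 * (sqrt (sqnorm2 u) * sqrt (sqnorm2 (u' - u)))"
    using sqnorm2_increment[OF u u'] sqnorm2_nonneg by simp
  also have "\<dots> \<le> r * (1\<^sup>2 + 2 * sqrt (sqnorm2 u) * 1)"
    using r r0 sqnorm2_nonneg[of "u' - u"] sqnorm2_nonneg[of u]
    by (intro quadratic_increment_le) simp_all
  finally show ?thesis by simp
qed

lemma sqnorm1_increment_le:
  assumes u: "u \<in> Hr M I e lam 2" and u': "u' \<in> Hr M I e lam 2"
    and r: "sqrt (sqnorm2 (u' - u)) \<le> r" "r \<le> 1"
  shows "\<bar>sqnorm1 u' - sqnorm1 u\<bar>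
    \<le> r * ((1 / sqrt (sqrt lam_min))\<^sup>2 + 2 * sqrt (sqnorm1 u) * (1 / sqrt (sqrt lam_min)))"
proof -
  define \<kappa> where "\<kappa> = 1 / sqrt (sqrt lam_min)"
  have \<kappa>: "0 \<le> \<kappa>" unfolding \<kappa>_def using lam_min_pos by simp
  have "sqrt (sqnorm1 (u' - u)) \<le> sqrt (sqnorm2 (u' - u)) * \<kappa>"
    unfolding \<kappa>_def by (rule sqrt_sqnorm1_le_sqnorm2[OF H2_diff[OF u' u]])
  also have "\<dots> \<le> r * \<kappa>" by (rule mult_right_mono[OF r(1) \<kappa>])
  finally have "sqrt (sqnorm1 (u' - u)) \<le> r * \<kappa>" .
  moreover have "\<bar>sqnorm1 u' - sqnorm1 u\<bar>
      \<le> (sqrt (sqnorm1 (u' - u)))\<^sup>2 + 2 * (sqrt (sqnorm1 u) * sqrt (sqnorm1 (u' - u)))"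
    using sqnorm1_increment[OF u u'] sqnorm1_nonneg by simp
  ultimately show ?thesis
    using r \<kappa> real_sqrt_ge_zero[OF sqnorm2_nonneg] real_sqrt_ge_zero[OF sqnorm1_nonneg]
    unfolding \<kappa>_def[symmetric] by (smt (verit) quadratic_increment_le)
qed

lemma pospart_sqnorm_increment_le:
  assumes u: "u \<in> Hr M I e lam 2" and u': "u' \<in> Hr M I e lam 2"
    and r: "sqrt (sqnorm2 (u' - u)) \<le> r" "r \<le> 1"
  shows "\<bar>ip M (pospart u') (pospart u') - ip M (pospart u) (pospart u)\<bar>
    \<le> r * ((1 / sqrt lam_min)\<^sup>2 + 2 * sqrt (ip M u u) * (1 / sqrt lam_min))"
proof -
  define \<iota> where "\<iota> = 1 / sqrt lam_min"
  have \<iota>: "0 \<le> \<iota>" unfolding \<iota>_def using lam_min_pos by simp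
  have "sqrt (ip M (u' - u) (u' - u)) \<le> sqrt (sqnorm2 (u' - u)) * \<iota>"
    unfolding \<iota>_def by (rule sqrt_ip_self_le_sqnorm2[OF H2_diff[OF u' u]])
  also have "\<dots> \<le> r * \<iota>" by (rule mult_right_mono[OF r(1) \<iota>])
  finally have "sqrt (ip M (u' - u) (u' - u)) \<le> r * \<iota>" .
  moreover have "\<bar>ip M (pospart u') (pospart u') - ip M (pospart u) (pospart u)\<bar>
      \<le> (sqrt (ip M (u' - u) (u' - u)))\<^sup>2 + 2 * (sqrt (ip M u u) * sqrt (ip M (u' - u) (u' - u)))"
    using ip_pospart_self_increment[OF H2_imp_L2[OF u] H2_imp_L2[OF u']] ip_self_nonneg[of M "u' - u"]
    by simp
  ultimately show ?thesis
    using r \<iota> real_sqrt_ge_zero[OF sqnorm2_nonneg] real_sqrt_ge_zero[OF ip_self_nonneg]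
    unfolding \<iota>_def[symmetric] by (smt (verit) quadratic_increment_le)
qed

lemma ip_forcing_increment_le:
  assumes u: "u \<in> Hr M I e lam 2" and u': "u' \<in> Hr M I e lam 2" and f: "f \<in> L2 M"
    and r: "sqrt (sqnorm2 (u' - u)) \<le> r"
  shows "\<bar>ip M u' f - ip M u f\<bar> \<le> r * (1 / sqrt lam_min * nrm M f)"
proof -
  have x: "u' - u \<in> Hr M I e lam 2" by (rule H2_diff[OF u' u])
  have "\<bar>ip M u' f - ip M u f\<bar> = \<bar>ip M (u' - u) f\<bar>"
    by (simp add: ip_diff_left[OF H2_imp_L2[OF u'] H2_imp_L2[OF u] f])
  also have "\<dots> \<le> sqrt (ip M (u' - u) (u' - u)) * nrm M f"
    using abs_ip_le_nrm_mult[OF H2_imp_L2[OF x] f] by (simp add: nrm_def)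
  also have "\<dots> \<le> (r * (1 / sqrt lam_min)) * nrm M f"
  proof (intro mult_right_mono nrm_nonneg)
    have "sqrt (sqnorm2 (u' - u)) * (1 / sqrt lam_min) \<le> r * (1 / sqrt lam_min)"
      by (rule mult_right_mono[OF r]) (use lam_min_pos in simp)
    thus "sqrt (ip M (u' - u) (u' - u)) \<le> r * (1 / sqrt lam_min)"
      using sqrt_ip_self_le_sqnorm2[OF x] by linarith
  qed
  finally show ?thesis by simp
qed

lemma phase_memD:
  assumes "z \<in> phase M I e lam"
  shows "fst z \<in> Hr M I e lam 2" "snd z \<in> L2 M"
  using assms by (auto simp: phase_def mem_Times_iff)

lemma sqrt_sqnorm2_le_phase_norm: "sqrt (sqnorm2 (fst z)) \<le> phase_norm M I e lam z"
  unfolding phase_norm_eq using ip_self_nonneg by simp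

lemma sqrt_ip_snd_le_phase_norm: "sqrt (ip M (snd z) (snd z)) \<le> phase_norm M I e lam z"
  unfolding phase_norm_eq using sqnorm2_nonneg by simp

definition lyap_modulus :: "real \<Rightarrow> real \<Rightarrow> ('w \<Rightarrow> real) \<Rightarrow> ('w \<Rightarrow> real) \<times> ('w \<Rightarrow> real) \<Rightarrow> real" where
  "lyap_modulus p k f z =
     (let u = fst z; v = snd z; \<kappa> = 1 / sqrt (sqrt lam_min); \<iota> = 1 / sqrt lam_min;
          \<alpha> = \<kappa>\<^sup>2 + 2 * sqrt (sqnorm1 u) * \<kappa>
      in (1 + 2 * sqrt (sqnorm2 u)) + (1 + 2 * sqrt (ip M v v))
         + 1/2 * (\<alpha> * (\<alpha> + 2 * \<bar>sqnorm1 u - p\<bar>))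
         + k\<^sup>2 * (\<iota>\<^sup>2 + 2 * sqrt (ip M u u) * \<iota>) + 2 * (\<iota> * nrm M f))"

lemma lyap_increment_le:
  assumes f: "f \<in> L2 M" and z: "z \<in> phase M I e lam" and z': "z' \<in> phase M I e lam"
    and r1: "phase_norm M I e lam (fst z' - fst z, snd z' - snd z) \<le> 1"
  shows "\<bar>lyap M I e lam p k f z' - lyap M I e lam p k f z\<bar>
    \<le> phase_norm M I e lam (fst z' - fst z, snd z' - snd z) * lyap_modulus p k f z"
proof -
  define u v u' v' where "u = fst z" and "v = snd z" and "u' = fst z'" and "v' = snd z'"
  define r where "r = phase_norm M I e lam (fst z' - fst z, snd z' - snd z)"
  define \<kappa> \<iota> where "\<kappa> = 1 / sqrt (sqrt lam_min)" and "\<iota> = 1 / sqrt lam_min"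
  define \<alpha> where "\<alpha> = \<kappa>\<^sup>2 + 2 * sqrt (sqnorm1 u) * \<kappa>"
  have uH: "u \<in> Hr M I e lam 2" and vL: "v \<in> L2 M" and u'H: "u' \<in> Hr M I e lam 2" and v'L: "v' \<in> L2 M"
    using phase_memD[OF z] phase_memD[OF z'] by (simp_all add: u_def v_def u'_def v'_def)
  have ru: "sqrt (sqnorm2 (u' - u)) \<le> r" and rv: "sqrt (ip M (v' - v) (v' - v)) \<le> r"
    using sqrt_sqnorm2_le_phase_norm sqrt_ip_snd_le_phase_norm
    unfolding r_def u_def v_def u'_def v'_def by fastforce+
  have r: "0 \<le> r" "r \<le> 1"
    using r1 ru real_sqrt_ge_zero[OF sqnorm2_nonneg[of "u' - u"]] unfolding r_def by linarith+
  have \<alpha>: "0 \<le> \<alpha>"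
    unfolding \<alpha>_def \<kappa>_def using lam_min_pos real_sqrt_ge_zero[OF sqnorm1_nonneg[of u]] by simp
  have T3: "\<bar>1/2 * (sqnorm1 u' - p)\<^sup>2 - 1/2 * (sqnorm1 u - p)\<^sup>2\<bar> \<le> r * (1/2 * (\<alpha> * (\<alpha> + 2 * \<bar>sqnorm1 u - p\<bar>)))"
    using sqnorm1_increment_le[OF uH u'H ru r(2)] r \<alpha>
    by (intro half_square_shift_le) (simp_all add: \<alpha>_def \<kappa>_def)
  have T4: "\<bar>k\<^sup>2 * ip M (pospart u') (pospart u') - k\<^sup>2 * ip M (pospart u) (pospart u)\<bar>
      \<le> r * (k\<^sup>2 * (\<iota>\<^sup>2 + 2 * sqrt (ip M u u) * \<iota>))"
  proof -
    have "\<bar>k\<^sup>2 * ip M (pospart u') (pospart u') - k\<^sup>2 * ip M (pospart u) (pospart u)\<bar>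
        = k\<^sup>2 * \<bar>ip M (pospart u') (pospart u') - ip M (pospart u) (pospart u)\<bar>"
      by (simp only: right_diff_distrib[symmetric] abs_mult abs_power2)
    also have "\<dots> \<le> k\<^sup>2 * (r * (\<iota>\<^sup>2 + 2 * sqrt (ip M u u) * \<iota>))"
      unfolding \<iota>_def by (rule mult_left_mono[OF pospart_sqnorm_increment_le[OF uH u'H ru r(2)]]) simp
    finally show ?thesis by (simp only: mult.left_commute)
  qed
  have T5: "\<bar>2 * ip M u' f - 2 * ip M u f\<bar> \<le> r * (2 * (\<iota> * nrm M f))"
  proof -
    have "\<bar>2 * ip M u' f - 2 * ip M u f\<bar> = 2 * \<bar>ip M u' f - ip M u f\<bar>"
      by (simp only: right_diff_distrib[symmetric] abs_mult abs_numeral)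
    also have "\<dots> \<le> 2 * (r * (\<iota> * nrm M f))"
      unfolding \<iota>_def by (rule mult_left_mono[OF ip_forcing_increment_le[OF uH u'H f ru]]) simp
    finally show ?thesis by (simp only: mult.left_commute)
  qed
  have "lyap M I e lam p k f z' - lyap M I e lam p k f z =
      (sqnorm2 u' - sqnorm2 u) + (ip M v' v' - ip M v v)
      + (1/2 * (sqnorm1 u' - p)\<^sup>2 - 1/2 * (sqnorm1 u - p)\<^sup>2)
      + (k\<^sup>2 * ip M (pospart u') (pospart u') - k\<^sup>2 * ip M (pospart u) (pospart u))
      - (2 * ip M u' f - 2 * ip M u f)"
    unfolding lyap_eq u_def v_def u'_def v'_def by simp
  moreover have "r * lyap_modulus p k f z = r * (1 + 2 * sqrt (sqnorm2 u)) + r * (1 + 2 * sqrt (ip M v v))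
      + r * (1/2 * (\<alpha> * (\<alpha> + 2 * \<bar>sqnorm1 u - p\<bar>)))
      + r * (k\<^sup>2 * (\<iota>\<^sup>2 + 2 * sqrt (ip M u u) * \<iota>)) + r * (2 * (\<iota> * nrm M f))"
    unfolding lyap_modulus_def Let_def \<alpha>_def \<kappa>_def \<iota>_def u_def v_def by (simp only: distrib_left)
  ultimately show ?thesis
    using sqnorm2_increment_le[OF uH u'H ru r(2)] ip_self_increment_le[OF vL v'L rv r(2)] T3 T4 T5
    unfolding r_def[symmetric] abs_le_iff by linarith
qed

lemma lyap_continuous:
  assumes f: "f \<in> L2 M" and z: "z \<in> phase M I e lam" and ep: "\<epsilon> > 0"
  shows "\<exists>\<delta>>0. \<forall>z'\<in>phase M I e lam. phase_norm M I e lam (fst z' - fst z, snd z' - snd z) < \<delta> \<longrightarrow>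
    \<bar>lyap M I e lam p k f z' - lyap M I e lam p k f z\<bar> < \<epsilon>"
proof -
  define K where "K = \<bar>lyap_modulus p k f z\<bar>"
  define \<delta> where "\<delta> = min 1 (\<epsilon> / (K + 1))"
  have "\<bar>lyap M I e lam p k f z' - lyap M I e lam p k f z\<bar> < \<epsilon>"
    if z': "z' \<in> phase M I e lam" and r: "phase_norm M I e lam (fst z' - fst z, snd z' - snd z) < \<delta>" for z'
  proof -
    define r where "r = phase_norm M I e lam (fst z' - fst z, snd z' - snd z)"
    have r0: "0 \<le> r" and r\<delta>: "r < \<delta>" using r unfolding r_def phase_norm_def by simp_all
    have r1: "r \<le> 1" using r\<delta> unfolding \<delta>_def by simp
    have "\<bar>lyap M I e lam p k f z' - lyap M I e lam p k f z\<bar> \<le> r * lyap_modulus p k f z"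
      unfolding r_def by (rule lyap_increment_le[OF f z z' r1[unfolded r_def]])
    also have "\<dots> \<le> r * K" unfolding K_def by (rule mult_left_mono[OF abs_ge_self r0])
    also have "\<dots> \<le> \<epsilon> / (K + 1) * K"
      by (rule mult_right_mono) (use r\<delta> in \<open>simp_all add: \<delta>_def K_def\<close>)
    also have "\<dots> < \<epsilon>" using ep unfolding K_def by (simp add: field_simps)
    finally show ?thesis .
  qed
  moreover have "\<delta> > 0" unfolding \<delta>_def K_def using ep by simp
  ultimately show ?thesis by blast
qed

lemma abs_ip_forcing_le:
  assumes f: "f \<in> L2 M" and z: "z \<in> phase M I e lam"
  shows "\<bar>ip M (fst z) f\<bar> \<le> nrm M f / sqrt lam_min * phase_norm M I e lam z"
proof -
  have "\<bar>ip M (fst z) f\<bar> \<le> sqrt (ip M (fst z) (fst z)) * nrm M f"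
    using abs_ip_le_nrm_mult[OF H2_imp_L2[OF phase_memD(1)[OF z]] f] by (simp add: nrm_def)
  also have "\<dots> \<le> phase_norm M I e lam z * (1 / sqrt lam_min) * nrm M f"
  proof (intro mult_right_mono nrm_nonneg)
    have "sqrt (sqnorm2 (fst z)) * (1 / sqrt lam_min) \<le> phase_norm M I e lam z * (1 / sqrt lam_min)"
      using sqrt_sqnorm2_le_phase_norm[of z] lam_min_pos by (intro mult_right_mono) auto
    thus "sqrt (ip M (fst z) (fst z)) \<le> phase_norm M I e lam z * (1 / sqrt lam_min)"
      using sqrt_ip_self_le_sqnorm2[OF phase_memD(1)[OF z]] by linarith
  qed
  finally show ?thesis by (simp add: mult.commute)
qed

lemma lyap_lower_bound:
  assumes f: "f \<in> L2 M" and z: "z \<in> phase M I e lam"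
  shows "(phase_norm M I e lam z)\<^sup>2 - 2 * (nrm M f / sqrt lam_min) * phase_norm M I e lam z
    \<le> lyap M I e lam p k f z"
proof -
  have "(phase_norm M I e lam z)\<^sup>2 = sqnorm2 (fst z) + ip M (snd z) (snd z)"
    unfolding phase_norm_eq using add_nonneg_nonneg[OF sqnorm2_nonneg ip_self_nonneg] by simp
  moreover have "0 \<le> 1/2 * (sqnorm1 (fst z) - p)\<^sup>2 + k\<^sup>2 * ip M (pospart (fst z)) (pospart (fst z))"
    using ip_self_nonneg[of M "pospart (fst z)"] by simp
  ultimately show ?thesis
    using abs_ip_forcing_le[OF f z] unfolding lyap_eq by (simp add: abs_le_iff)
qed

definition lyap_majorant :: "real \<Rightarrow> real \<Rightarrow> ('w \<Rightarrow> real) \<Rightarrow> real \<Rightarrow> real" where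
  "lyap_majorant p k f N = N\<^sup>2 + 1/2 * (N\<^sup>2 / sqrt lam_min + \<bar>p\<bar>)\<^sup>2 + k\<^sup>2 * (N\<^sup>2 / lam_min)
     + 2 * (nrm M f / sqrt lam_min) * N"

lemma lyap_majorant_mono:
  assumes "0 \<le> N" "N \<le> N'"
  shows "lyap_majorant p k f N \<le> lyap_majorant p k f N'"
proof -
  have sq: "N\<^sup>2 \<le> N'\<^sup>2" using assms by (intro power_mono) auto
  have "N\<^sup>2 / sqrt lam_min \<le> N'\<^sup>2 / sqrt lam_min" by (rule divide_right_mono[OF sq]) (use lam_min_pos in simp)
  hence "(N\<^sup>2 / sqrt lam_min + \<bar>p\<bar>)\<^sup>2 \<le> (N'\<^sup>2 / sqrt lam_min + \<bar>p\<bar>)\<^sup>2"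
    using lam_min_pos by (intro power_mono) auto
  moreover have "k\<^sup>2 * (N\<^sup>2 / lam_min) \<le> k\<^sup>2 * (N'\<^sup>2 / lam_min)"
    using sq lam_min_pos by (intro mult_left_mono divide_right_mono) auto
  moreover have "nrm M f / sqrt lam_min * N \<le> nrm M f / sqrt lam_min * N'"
    using assms lam_min_pos nrm_nonneg[of M f] by (intro mult_left_mono) auto
  ultimately show ?thesis unfolding lyap_majorant_def using sq by simp
qed

lemma lyap_upper_bound:
  assumes f: "f \<in> L2 M" and z: "z \<in> phase M I e lam"
  shows "lyap M I e lam p k f z \<le> lyap_majorant p k f (phase_norm M I e lam z)"
proof -
  define u N where "u = fst z" and "N = phase_norm M I e lam z"
  have uH: "u \<in> Hr M I e lam 2" using phase_memD[OF z] by (simp add: u_def)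
  have NN: "N\<^sup>2 = sqnorm2 u + ip M (snd z) (snd z)"
    unfolding N_def u_def phase_norm_eq using add_nonneg_nonneg[OF sqnorm2_nonneg ip_self_nonneg] by simp
  have Q2N: "sqnorm2 u \<le> N\<^sup>2" using NN ip_self_nonneg[of M "snd z"] by simp
  have "sqnorm1 u \<le> N\<^sup>2 / sqrt lam_min"
    using sqnorm1_le_sqnorm2[OF uH] Q2N lam_min_pos by (smt (verit) divide_right_mono real_sqrt_gt_0_iff)
  hence "\<bar>sqnorm1 u - p\<bar> \<le> N\<^sup>2 / sqrt lam_min + \<bar>p\<bar>" using sqnorm1_nonneg[of u] by linarith
  hence q1: "(sqnorm1 u - p)\<^sup>2 \<le> (N\<^sup>2 / sqrt lam_min + \<bar>p\<bar>)\<^sup>2"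
    by (metis abs_ge_zero power2_abs power_mono)
  have "ip M (pospart u) (pospart u) \<le> N\<^sup>2 / lam_min"
    using ip_pospart_le[OF H2_imp_L2[OF uH]] ip_self_le_sqnorm2[OF uH] Q2N lam_min_pos
    by (smt (verit) divide_right_mono)
  hence "k\<^sup>2 * ip M (pospart u) (pospart u) \<le> k\<^sup>2 * (N\<^sup>2 / lam_min)" by (intro mult_left_mono) auto
  thus ?thesis
    using NN q1 abs_ip_forcing_le[OF f z]
    unfolding lyap_eq lyap_majorant_def u_def[symmetric] N_def[symmetric] by (simp add: abs_le_iff)
qed

lemma phase_norm_at_top_if_lyap_at_top:
  assumes f: "f \<in> L2 M" and Z: "\<And>n. Z n \<in> phase M I e lam"
    and L: "filterlim (\<lambda>n. lyap M I e lam p k f (Z n)) at_top sequentially"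
  shows "filterlim (\<lambda>n. phase_norm M I e lam (Z n)) at_top sequentially"
  unfolding filterlim_at_top
proof
  fix B :: real
  have "eventually (\<lambda>n. lyap_majorant p k f (max B 0) < lyap M I e lam p k f (Z n)) sequentially"
    using L unfolding filterlim_at_top_dense by blast
  thus "eventually (\<lambda>n. B \<le> phase_norm M I e lam (Z n)) sequentially"
  proof (rule eventually_mono)
    fix n assume big: "lyap_majorant p k f (max B 0) < lyap M I e lam p k f (Z n)"
    show "B \<le> phase_norm M I e lam (Z n)"
    proof (rule ccontr)
      assume "\<not> B \<le> phase_norm M I e lam (Z n)"
      hence "lyap_majorant p k f (phase_norm M I e lam (Z n)) \<le> lyap_majorant p k f (max B 0)"
        by (intro lyap_majorant_mono) (simp_all add: phase_norm_def)
      thus False using lyap_upper_bound[OF f Z[of n], where p = p and k = k] big by linarith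
    qed
  qed
qed

lemma lyap_at_top_if_phase_norm_at_top:
  assumes f: "f \<in> L2 M" and Z: "\<And>n. Z n \<in> phase M I e lam"
    and N: "filterlim (\<lambda>n. phase_norm M I e lam (Z n)) at_top sequentially"
  shows "filterlim (\<lambda>n. lyap M I e lam p k f (Z n)) at_top sequentially"
  unfolding filterlim_at_top
proof
  fix B :: real
  define c where "c = nrm M f / sqrt lam_min"
  have "eventually (\<lambda>n. max \<bar>B\<bar> (2 * c + 1) \<le> phase_norm M I e lam (Z n)) sequentially"
    using N unfolding filterlim_at_top by blast
  thus "eventually (\<lambda>n. B \<le> lyap M I e lam p k f (Z n)) sequentially"
  proof (rule eventually_mono)
    fix n assume h: "max \<bar>B\<bar> (2 * c + 1) \<le> phase_norm M I e lam (Z n)"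
    define r where "r = phase_norm M I e lam (Z n)"
    have "r * 1 \<le> r * (r - 2 * c)" using h unfolding r_def[symmetric] by (intro mult_left_mono) auto
    hence "r \<le> r\<^sup>2 - 2 * c * r" by (simp add: power2_eq_square algebra_simps)
    thus "B \<le> lyap M I e lam p k f (Z n)"
      using lyap_lower_bound[OF f Z[of n], where p = p and k = k] h unfolding c_def r_def by linarith
  qed
qed

end

theorem proposition4p3:
  fixes M :: "'w measure" and I :: "nat set" and e :: "nat \<Rightarrow> 'w \<Rightarrow> real"
    and lam :: "nat \<Rightarrow> real" and p k :: real and f :: "'w \<Rightarrow> real"
    and S :: "real \<Rightarrow> ('w \<Rightarrow> real) \<times> ('w \<Rightarrow> real) \<Rightarrow> ('w \<Rightarrow> real) \<times> ('w \<Rightarrow> real)"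
  assumes spec: "spectral_setting M I e lam"
    and f: "f \<in> L2 M"
    and S_sol: "\<forall>z\<in>phase M I e lam.
        weak_solution M I e lam p k f (\<lambda>t. fst (S t z)) (\<lambda>t. snd (S t z)) \<and>
        (AE x in M. fst (S 0 z) x = fst z x) \<and> (AE x in M. snd (S 0 z) x = snd z x)"
  shows "(\<forall>z\<in>phase M I e lam. \<forall>\<epsilon>>0. \<exists>\<delta>>0. \<forall>z'\<in>phase M I e lam.
            phase_norm M I e lam (fst z' - fst z, snd z' - snd z) < \<delta> \<longrightarrow> \<bar>(lyap M I e lam p k f) z' - (lyap M I e lam p k f) z\<bar> < \<epsilon>)
       \<and> (\<forall>Z. (\<forall>n. Z n \<in> phase M I e lam) \<longrightarrow>
            (filterlim (\<lambda>n. (lyap M I e lam p k f) (Z n)) at_top sequentially \<longleftrightarrow>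
             filterlim (\<lambda>n. phase_norm M I e lam (Z n)) at_top sequentially))
       \<and> (\<forall>z\<in>phase M I e lam. \<forall>s t. 0 \<le> s \<and> s \<le> t \<longrightarrow> (lyap M I e lam p k f) (S t z) \<le> (lyap M I e lam p k f) (S s z))
       \<and> (\<forall>z\<in>phase M I e lam. \<forall>t\<ge>0.
            ((\<lambda>s. (lyap M I e lam p k f) (S s z)) has_real_derivative (- 2 * (nrm M (snd (S t z)))\<^sup>2)) (at t within {0..}))
       \<and> (\<forall>z\<in>phase M I e lam. (\<forall>t>0. (lyap M I e lam p k f) (S t z) = (lyap M I e lam p k f) z) \<longrightarrow> z \<in> stationary_set M I e lam p k f)"
proof -
  interpret spectral_basis M I e lam by (rule spectral_basis.intro[OF spec])
  have traj: "trajectory M I e lam p k f (\<lambda>t. fst (S t z)) (\<lambda>t. snd (S t z))" if "z \<in> phase M I e lam" for z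
    using S_sol that spec f by (simp add: trajectory_def trajectory_axioms_def spectral_basis_def)
  have stationary: "z \<in> stationary_set M I e lam p k f"
    if z: "z \<in> phase M I e lam" and const: "\<forall>t>0. lyap M I e lam p k f (S t z) = lyap M I e lam p k f z" for z
  proof -
    have "(fst (S 0 z), snd (S 0 z)) \<in> stationary_set M I e lam p k f"
      using trajectory.initial_state_stationary[OF traj[OF z], of "lyap M I e lam p k f z"] const
      by simp
    hence "(fst z, snd z) \<in> stationary_set M I e lam p k f"
      by (rule stationary_set_cong_AE[OF _ phase_memD[OF z]]) (use S_sol z in auto)
    thus ?thesis by simp
  qed
  have coercive: "filterlim (\<lambda>n. lyap M I e lam p k f (Z n)) at_top sequentially \<longleftrightarrow>
      filterlim (\<lambda>n. phase_norm M I e lam (Z n)) at_top sequentially"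
    if "\<forall>n. Z n \<in> phase M I e lam" for Z
    using phase_norm_at_top_if_lyap_at_top[OF f] lyap_at_top_if_phase_norm_at_top[OF f] that by blast
  show ?thesis
    using lyap_continuous[OF f] coercive stationary
      trajectory.lyap_antimono[OF traj] trajectory.lyap_has_derivative[OF traj]
    by (simp add: nrm_square)
qed

end
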